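(* For every prime $p$, $\operatorname{rank}_{\mathbb Z}K(C_p\times C_p,C_p)=p^2$.
   Context: For $K\le G=C_p\times C_p$ and a homomorphism $\rho:K\to C_p$, $K\times\rho=\{(k,\rho(k))\}\le G\times C_p$. $B(G,C_p)$ is the subgroup of the Burnside ring $B(G\times C_p)$ (free on the subgroups of $G\times C_p$) spanned by graphs. $K(G\times C_p)$ is the kernel of $B(G\times C_p)\to R_{\mathbb Q}(G\times C_p)$, $S\mapsto[\mathbb Q[(G\times C_p)/S]]$, and $K(G,C_p)=K(G\times C_p)\cap B(G,C_p)$. *)

theory Defs
  imports "HOL-Algebra.Algebra" "HOL-Computational_Algebra.Primes"
begin

abbreviation Cyc :: "nat \<Rightarrow> int monoid" where
  "Cyc n \<equiv> integer_mod_group n"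

definition hom_graph :: "'a set \<Rightarrow> ('a \<Rightarrow> 'b) \<Rightarrow> ('a \<times> 'b) set" where
  "hom_graph K \<rho> = (\<lambda>k. (k, \<rho> k)) ` K"

definition is_graph :: "('a, 'c) monoid_scheme \<Rightarrow> ('b, 'd) monoid_scheme \<Rightarrow> ('a \<times> 'b) set \<Rightarrow> bool" where
  "is_graph G H L \<longleftrightarrow>
     (\<exists>K \<rho>. subgroup K G \<and> \<rho> \<in> hom (G\<lparr>carrier := K\<rparr>) H \<and> L = hom_graph K \<rho>)"

text \<open>For an abelian group, conjugacy classes of subgroups are just subgroups,
  so B(W) is the free abelian group on the subgroups of W, modelled as
  integer-valued functions on sets supported on subgroups.\<close>

definition burnside :: "('a, 'c) monoid_scheme \<Rightarrow> ('a set \<Rightarrow> int) set" where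
  "burnside W = {x. \<forall>S. x S \<noteq> 0 \<longrightarrow> subgroup S W}"

text \<open>The W-set which is the disjoint union, over subgroups S, of m S copies of W/S.\<close>
definition psets :: "('a, 'c) monoid_scheme \<Rightarrow> ('a set \<Rightarrow> nat) \<Rightarrow> ('a set \<times> nat \<times> 'a set) set" where
  "psets W m = {(S, j, C). subgroup S W \<and> j < m S \<and> C \<in> lcosets\<^bsub>W\<^esub> S}"

definition cact :: "('a, 'c) monoid_scheme \<Rightarrow> 'a \<Rightarrow> ('a set \<times> nat \<times> 'a set) \<Rightarrow> ('a set \<times> nat \<times> 'a set)" where
  "cact W g = (\<lambda>(S, j, C). (S, j, l_coset W g C))"

definition Qfun :: "'x set \<Rightarrow> ('x \<Rightarrow> rat) set" where
  "Qfun Xs = {f. \<forall>x. x \<notin> Xs \<longrightarrow> f x = 0}"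

definition pact :: "('g, 'c) monoid_scheme \<Rightarrow> ('g \<Rightarrow> 'x \<Rightarrow> 'x) \<Rightarrow> 'x set \<Rightarrow> 'g \<Rightarrow> ('x \<Rightarrow> rat) \<Rightarrow> ('x \<Rightarrow> rat)" where
  "pact W a Xs g f = (\<lambda>x. if x \<in> Xs then f (a (inv\<^bsub>W\<^esub> g) x) else 0)"

definition rep_iso :: "('g, 'c) monoid_scheme \<Rightarrow> ('g \<Rightarrow> 'x \<Rightarrow> 'x) \<Rightarrow> 'x set
                      \<Rightarrow> ('g \<Rightarrow> 'y \<Rightarrow> 'y) \<Rightarrow> 'y set \<Rightarrow> bool" where
  "rep_iso W a Xs b Ys \<longleftrightarrow>
     (\<exists>T. bij_betw T (Qfun Xs) (Qfun Ys)
        \<and> (\<forall>f\<in>Qfun Xs. \<forall>h\<in>Qfun Xs. T (\<lambda>x. f x + h x) = (\<lambda>y. T f y + T h y))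
        \<and> (\<forall>c. \<forall>f\<in>Qfun Xs. T (\<lambda>x. c * f x) = (\<lambda>y. c * T f y))
        \<and> (\<forall>g\<in>carrier W. \<forall>f\<in>Qfun Xs. T (pact W a Xs g f) = pact W b Ys g (T f)))"

text \<open>x = sum_S x_S [W/S] maps to 0 in the Grothendieck group R_Q(W) iff
  the permutation modules of the positive and negative parts are isomorphic.\<close>
definition burnside_kernel :: "('a, 'c) monoid_scheme \<Rightarrow> ('a set \<Rightarrow> int) set" where
  "burnside_kernel W = {x \<in> burnside W.
      rep_iso W (cact W) (psets W (\<lambda>S. nat (x S))) (cact W) (psets W (\<lambda>S. nat (- x S)))}"

text \<open>B(G,H): span of the graphs inside B(G x H); K(G,H) = K(G x H) \<inter> B(G,H).\<close>
definition burnside_bi :: "('a, 'c) monoid_scheme \<Rightarrow> ('b, 'd) monoid_scheme \<Rightarrow> (('a \<times> 'b) set \<Rightarrow> int) set" where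
  "burnside_bi G H = {x \<in> burnside (G \<times>\<times> H). \<forall>L. x L \<noteq> 0 \<longrightarrow> is_graph G H L}"

definition kernel_bi :: "('a, 'c) monoid_scheme \<Rightarrow> ('b, 'd) monoid_scheme \<Rightarrow> (('a \<times> 'b) set \<Rightarrow> int) set" where
  "kernel_bi G H = burnside_kernel (G \<times>\<times> H) \<inter> burnside_bi G H"

definition int_indep :: "('s \<Rightarrow> int) set \<Rightarrow> bool" where
  "int_indep A \<longleftrightarrow> (\<forall>c. (\<lambda>S. \<Sum>v\<in>A. c v * v S) = (\<lambda>S. 0) \<longrightarrow> (\<forall>v\<in>A. c v = 0))"

definition zrank :: "('s \<Rightarrow> int) set \<Rightarrow> nat" where
  "zrank M = (GREATEST n. \<exists>A. A \<subseteq> M \<and> finite A \<and> card A = n \<and> int_indep A)"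

end

theory Submission
  imports Defs
begin

(* Write W = V \<times> C_p with V = C_p \<times> C_p. A graph subgroup of W has order 1, p or p^2, and
  those of order p^2 are the graphs of the p^2 linear forms V \<rightarrow> C_p ("planes").
  A plane P is the union of p + 1 lines L_0, ..., L_p (subgroups of order p) meeting
  pairwise in 1, and Q[W] \<oplus> Q[W/P]^p \<cong> \<Oplus>_i Q[W/L_i]; hence [W/1] + p [W/P] - \<Sum>_i [W/L_i]
  lies in K(V, C_p). These p^2 elements are independent: each has coefficient p on its
  own plane and 0 on all the others.
  Conversely, the number of C-orbits of a W-set X is the dimension of the C-fixed vectors
  of Q[X], so every x \<in> K(W) satisfies \<Sum>_S x_S |W/SC| = 0 for each subgroup C. For an
  element of K(V, C_p) vanishing on all planes, these equations with C = W and with C of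
  order p give x_1 + x_C = 0; since the vertical line 1 \<times> C_p is not a graph, x_1 = 0 and
  so x = 0. Thus K(V, C_p) embeds into Z^(planes), and its rank is p^2. *)

section \<open>Linear algebra over finitely supported rational functions\<close>

lemma homogeneous_system_nontrivial_solution:
  fixes f :: "'i \<Rightarrow> 's \<Rightarrow> 'r::idom"
  assumes "finite P" "finite I" "card P < card I"
  shows "\<exists>c. (\<exists>i\<in>I. c i \<noteq> 0) \<and> (\<forall>s\<in>P. (\<Sum>i\<in>I. c i * f i s) = 0)"
  using assms
proof (induction P arbitrary: I f rule: finite_induct)
  case empty
  then have "I \<noteq> {}" by auto
  then show ?case by (rule_tac x="\<lambda>_. 1" in exI) auto
next
  case (insert s P)
  show ?case
  proof (cases "\<forall>i\<in>I. f i s = 0")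
    case True
    from insert have "card P < card I" by simp
    from insert.IH[OF insert.prems(1) this] obtain c where
      c: "\<exists>i\<in>I. c i \<noteq> 0" "\<forall>t\<in>P. (\<Sum>i\<in>I. c i * f i t) = 0" by blast
    show ?thesis using c True by (rule_tac x=c in exI) auto
  next
    case False
    then obtain i0 where i0: "i0 \<in> I" "f i0 s \<noteq> 0" by blast
    \<comment> \<open>eliminate the unknown i0 by means of the equation s\<close>
    define I' where "I' = I - {i0}"
    define g where "g i t = f i0 s * f i t - f i s * f i0 t" for i t
    have fI': "finite I'" using insert.prems I'_def by simp
    have cI': "card I' = card I - 1" using i0 insert.prems I'_def by simp
    have "card P < card I'" using insert cI' by simp
    from insert.IH[OF fI' this] obtain c' where
      c': "\<exists>i\<in>I'. c' i \<noteq> 0" "\<forall>t\<in>P. (\<Sum>i\<in>I'. c' i * g i t) = 0" by blast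
    define c where "c i = (if i = i0 then - (\<Sum>j\<in>I'. c' j * f j s) else c' i * f i0 s)" for i
    have key: "(\<Sum>i\<in>I. c i * f i t) = (\<Sum>i\<in>I'. c' i * g i t)" for t
    proof -
      have "(\<Sum>i\<in>I. c i * f i t) = c i0 * f i0 t + (\<Sum>i\<in>I'. c i * f i t)"
        using i0 insert.prems I'_def by (simp add: sum.remove)
      also have "(\<Sum>i\<in>I'. c i * f i t) = (\<Sum>i\<in>I'. c' i * f i0 s * f i t)"
        by (rule sum.cong) (auto simp: c_def I'_def)
      also have "c i0 * f i0 t = - (\<Sum>j\<in>I'. c' j * f j s * f i0 t)"
        by (simp add: c_def sum_distrib_right)
      finally show ?thesis
        by (simp add: g_def algebra_simps sum_subtractf sum_distrib_left)
    qed
    show ?thesis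
    proof (rule exI[of _ c], intro conjI)
      from c'(1) obtain j where "j \<in> I'" "c' j \<noteq> 0" by blast
      then show "\<exists>i\<in>I. c i \<noteq> 0" using i0 by (rule_tac x=j in bexI) (auto simp: c_def I'_def)
      show "\<forall>t\<in>insert s P. (\<Sum>i\<in>I. c i * f i t) = 0"
        using c'(2) by (auto simp: key g_def)
    qed
  qed
qed

lemma Qfun_zero [simp]: "(\<lambda>_. 0) \<in> Qfun A"
  by (simp add: Qfun_def)

lemma Qfun_add [intro]: "f \<in> Qfun A \<Longrightarrow> h \<in> Qfun A \<Longrightarrow> (\<lambda>x. f x + h x) \<in> Qfun A"
  by (simp add: Qfun_def)

lemma Qfun_smult [intro]: "f \<in> Qfun A \<Longrightarrow> (\<lambda>x. c * f x) \<in> Qfun A"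
  by (simp add: Qfun_def)

lemma Qfun_sum [intro]: "(\<And>j. j \<in> J \<Longrightarrow> \<phi> j \<in> Qfun A) \<Longrightarrow> (\<lambda>x. \<Sum>j\<in>J. \<phi> j x) \<in> Qfun A"
  by (auto simp: Qfun_def intro!: sum.neutral)

lemma Qfun_outside: "f \<in> Qfun A \<Longrightarrow> x \<notin> A \<Longrightarrow> f x = 0"
  by (simp add: Qfun_def)

lemma Qfun_pact: "pact W a A g f \<in> Qfun A"
  by (simp add: pact_def Qfun_def)

definition Qfun_linear :: "'x set \<Rightarrow> 'y set \<Rightarrow> (('x \<Rightarrow> rat) \<Rightarrow> ('y \<Rightarrow> rat)) \<Rightarrow> bool" where
  "Qfun_linear A B T \<longleftrightarrow> (\<forall>f\<in>Qfun A. T f \<in> Qfun B)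
    \<and> (\<forall>f\<in>Qfun A. \<forall>h\<in>Qfun A. T (\<lambda>x. f x + h x) = (\<lambda>y. T f y + T h y))
    \<and> (\<forall>c. \<forall>f\<in>Qfun A. T (\<lambda>x. c * f x) = (\<lambda>y. c * T f y))"

context
  fixes A :: "'x set" and B :: "'y set" and T :: "('x \<Rightarrow> rat) \<Rightarrow> ('y \<Rightarrow> rat)"
  assumes lin: "Qfun_linear A B T"
begin

lemma Qfun_linear_closed: "f \<in> Qfun A \<Longrightarrow> T f \<in> Qfun B"
  using lin by (simp add: Qfun_linear_def)

lemma Qfun_linear_add: "f \<in> Qfun A \<Longrightarrow> h \<in> Qfun A \<Longrightarrow> T (\<lambda>x. f x + h x) = (\<lambda>y. T f y + T h y)"
  using lin by (simp add: Qfun_linear_def)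

lemma Qfun_linear_smult: "f \<in> Qfun A \<Longrightarrow> T (\<lambda>x. c * f x) = (\<lambda>y. c * T f y)"
  using lin by (simp add: Qfun_linear_def)

lemma Qfun_linear_zero: "T (\<lambda>_. 0) = (\<lambda>_. 0)"
  using Qfun_linear_smult[of "\<lambda>_. 0" 0] by simp

lemma Qfun_linear_sum:
  assumes "finite J" "\<And>j. j \<in> J \<Longrightarrow> \<phi> j \<in> Qfun A"
  shows "T (\<lambda>x. \<Sum>j\<in>J. \<phi> j x) = (\<lambda>y. \<Sum>j\<in>J. T (\<phi> j) y)"
  using assms
proof (induction J rule: finite_induct)
  case empty
  then show ?case using Qfun_linear_zero by simp
next
  case (insert j J)
  have "T (\<lambda>x. \<Sum>j\<in>insert j J. \<phi> j x) = T (\<lambda>x. \<phi> j x + (\<Sum>j\<in>J. \<phi> j x))"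
    using insert by simp
  also have "\<dots> = (\<lambda>y. T (\<phi> j) y + T (\<lambda>x. \<Sum>j\<in>J. \<phi> j x) y)"
    using insert by (intro Qfun_linear_add) auto
  finally show ?case using insert by simp
qed

lemma Qfun_linear_lincomb:
  assumes "finite J" "\<And>j. j \<in> J \<Longrightarrow> e j \<in> Qfun A"
  shows "T (\<lambda>x. \<Sum>j\<in>J. c j * e j x) = (\<lambda>y. \<Sum>j\<in>J. c j * T (e j) y)"
  using assms by (simp add: Qfun_linear_sum Qfun_smult Qfun_linear_smult)

lemma Qfun_linear_inj_on:
  assumes inj0: "\<And>f. f \<in> Qfun A \<Longrightarrow> T f = (\<lambda>_. 0) \<Longrightarrow> f = (\<lambda>_. 0)"
  shows "inj_on T (Qfun A)"
proof (rule inj_onI)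
  fix f h assume fh: "f \<in> Qfun A" "h \<in> Qfun A" "T f = T h"
  define d where "d = (\<lambda>x. f x + (-1) * h x)"
  have d: "d \<in> Qfun A" unfolding d_def using fh by (intro Qfun_add Qfun_smult)
  have "T d = (\<lambda>y. T f y + T (\<lambda>x. (-1) * h x) y)"
    unfolding d_def by (rule Qfun_linear_add[OF fh(1) Qfun_smult[OF fh(2)]])
  also have "T (\<lambda>x. (-1) * h x) = (\<lambda>y. (-1) * T h y)"
    using fh(2) by (rule Qfun_linear_smult)
  finally have "T d = (\<lambda>_. 0)" using fh(3) by simp
  with d have "d = (\<lambda>_. 0)" by (rule inj0)
  then show "f = h" unfolding d_def by (auto simp: fun_eq_iff)
qed

lemma Qfun_linear_surj:
  assumes fin: "finite A" "finite B" and card: "card B \<le> card A"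
    and inj0: "\<And>f. f \<in> Qfun A \<Longrightarrow> T f = (\<lambda>_. 0) \<Longrightarrow> f = (\<lambda>_. 0)"
    and h: "h \<in> Qfun B"
  shows "h \<in> T ` Qfun A"
proof -
  define \<delta> where "\<delta> x = (\<lambda>y. if y = x then (1::rat) else 0)" for x :: 'x
  have \<delta>: "x \<in> A \<Longrightarrow> \<delta> x \<in> Qfun A" for x by (simp add: \<delta>_def Qfun_def)
  \<comment> \<open>h and the T (\<delta> x) are |A| + 1 vectors in a space of dimension |B| \<le> |A|\<close>
  define F where "F i = (case i of None \<Rightarrow> h | Some x \<Rightarrow> T (\<delta> x))" for i
  have "card B < card (insert None (Some ` A))" using fin card by (simp add: card_image)
  from homogeneous_system_nontrivial_solution[OF fin(2) _ this, of F] obtain c where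
    c: "\<exists>i\<in>insert None (Some ` A). c i \<noteq> 0"
       "\<forall>s\<in>B. (\<Sum>i\<in>insert None (Some ` A). c i * F i s) = 0" using fin by auto
  define \<phi> where "\<phi> = (\<lambda>y. \<Sum>x\<in>A. c (Some x) * \<delta> x y)"
  have \<phi>: "\<phi> \<in> Qfun A" unfolding \<phi>_def using \<delta> by (intro Qfun_sum Qfun_smult) auto
  have \<phi>_at: "x \<in> A \<Longrightarrow> \<phi> x = c (Some x)" for x
    using fin by (simp add: \<phi>_def \<delta>_def if_distrib cong: if_cong)
  have T\<phi>: "T \<phi> = (\<lambda>s. \<Sum>x\<in>A. c (Some x) * T (\<delta> x) s)"
    unfolding \<phi>_def by (rule Qfun_linear_lincomb[OF fin(1) \<delta>])
  have dep: "c None * h s + T \<phi> s = 0" for s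
  proof (cases "s \<in> B")
    case True
    then show ?thesis using c(2) fin by (simp add: F_def T\<phi> sum.reindex)
  next
    case False
    then show ?thesis using Qfun_linear_closed[OF \<phi>] h by (simp add: Qfun_outside)
  qed
  have "c None \<noteq> 0"
  proof
    assume "c None = 0"
    then have "\<phi> = (\<lambda>_. 0)" using dep inj0[OF \<phi>] by auto
    then show False using c(1) \<phi>_at \<open>c None = 0\<close> by (metis image_iff insert_iff)
  qed
  have "T (\<lambda>y. (- 1 / c None) * \<phi> y) = (\<lambda>s. (- 1 / c None) * T \<phi> s)"
    by (rule Qfun_linear_smult[OF \<phi>])
  also have "\<dots> = h"
  proof
    fix s
    have "T \<phi> s = - (c None * h s)" using dep[of s] by (simp add: add_eq_0_iff)
    then show "(- 1 / c None) * T \<phi> s = h s" using \<open>c None \<noteq> 0\<close> by simp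
  qed
  finally have "T (\<lambda>y. (- 1 / c None) * \<phi> y) = h" .
  then show ?thesis using \<phi> by (metis Qfun_smult image_eqI)
qed

lemma Qfun_linear_bij_betw:
  assumes "finite A" "finite B" "card B \<le> card A"
    and "\<And>f. f \<in> Qfun A \<Longrightarrow> T f = (\<lambda>_. 0) \<Longrightarrow> f = (\<lambda>_. 0)"
  shows "bij_betw T (Qfun A) (Qfun B)"
  using Qfun_linear_inj_on[OF assms(4)] Qfun_linear_surj[OF assms] Qfun_linear_closed
  by (auto simp: bij_betw_def)

lemma Qfun_linear_card_fibres_le:
  fixes pa :: "'x \<Rightarrow> 'k" and pb :: "'y \<Rightarrow> 'l"
  assumes fin: "finite A" "finite B"
    and inj0: "\<And>f. f \<in> Qfun A \<Longrightarrow> T f = (\<lambda>_. 0) \<Longrightarrow> f = (\<lambda>_. 0)"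
    and fibres: "\<And>f. f \<in> Qfun A \<Longrightarrow> (\<forall>x\<in>A. \<forall>x'\<in>A. pa x = pa x' \<longrightarrow> f x = f x')
               \<Longrightarrow> (\<forall>y\<in>B. \<forall>y'\<in>B. pb y = pb y' \<longrightarrow> T f y = T f y')"
  shows "card (pa ` A) \<le> card (pb ` B)"
proof (rule ccontr)
  assume "\<not> ?thesis"
  then have lt: "card (pb ` B) < card (pa ` A)" by simp
  define rep where "rep k = (SOME y. y \<in> B \<and> pb y = k)" for k
  have rep: "y \<in> B \<Longrightarrow> rep (pb y) \<in> B \<and> pb (rep (pb y)) = pb y" for y
    unfolding rep_def by (rule someI) auto
  define e where "e k = (\<lambda>x. if x \<in> A \<and> pa x = k then (1::rat) else 0)" for k
  have e: "e k \<in> Qfun A" for k by (auto simp: e_def Qfun_def)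
  have "card (rep ` pb ` B) < card (pa ` A)"
    using lt card_image_le[of "pb ` B" rep] fin by simp
  from homogeneous_system_nontrivial_solution[OF _ _ this, of "\<lambda>k. T (e k)"] fin obtain c where
    c: "\<exists>k\<in>pa ` A. c k \<noteq> 0" "\<forall>s\<in>rep ` pb ` B. (\<Sum>k\<in>pa ` A. c k * T (e k) s) = 0"
    by auto
  define \<phi> where "\<phi> = (\<lambda>x. \<Sum>k\<in>pa ` A. c k * e k x)"
  have \<phi>: "\<phi> \<in> Qfun A" unfolding \<phi>_def using e by (intro Qfun_sum Qfun_smult)
  have T\<phi>: "T \<phi> = (\<lambda>s. \<Sum>k\<in>pa ` A. c k * T (e k) s)"
    unfolding \<phi>_def using fin(1) e by (intro Qfun_linear_lincomb) auto
  have \<phi>_at: "x \<in> A \<Longrightarrow> \<phi> x = c (pa x)" for x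
    using fin by (simp add: \<phi>_def e_def if_distrib cong: if_cong)
  have "T \<phi> s = 0" for s
  proof (cases "s \<in> B")
    case True
    have "T \<phi> s = T \<phi> (rep (pb s))"
      using fibres[OF \<phi>] \<phi>_at rep[OF True] True by metis
    also have "\<dots> = 0" using c(2) True T\<phi> by simp
    finally show ?thesis .
  next
    case False
    then show ?thesis using Qfun_linear_closed[OF \<phi>] by (simp add: Qfun_outside)
  qed
  then have "\<phi> = (\<lambda>_. 0)" using inj0[OF \<phi>] by auto
  then show False using c(1) \<phi>_at by auto
qed

end

lemma rep_iso_sym:
  assumes "rep_iso W a A b B"
  shows "rep_iso W b B a A"
proof -
  obtain T where T: "bij_betw T (Qfun A) (Qfun B)"
    "\<forall>f\<in>Qfun A. \<forall>h\<in>Qfun A. T (\<lambda>x. f x + h x) = (\<lambda>y. T f y + T h y)"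
    "\<forall>c. \<forall>f\<in>Qfun A. T (\<lambda>x. c * f x) = (\<lambda>y. c * T f y)"
    "\<forall>g\<in>carrier W. \<forall>f\<in>Qfun A. T (pact W a A g f) = pact W b B g (T f)"
    using assms unfolding rep_iso_def by blast
  define T' where "T' = inv_into (Qfun A) T"
  have bij': "bij_betw T' (Qfun B) (Qfun A)" unfolding T'_def by (rule bij_betw_inv_into[OF T(1)])
  have TT': "h \<in> Qfun B \<Longrightarrow> T (T' h) = h" for h
    unfolding T'_def using T(1) by (simp add: bij_betw_inv_into_right)
  have T'T: "f \<in> Qfun A \<Longrightarrow> T' (T f) = f" for f
    unfolding T'_def using T(1) by (simp add: bij_betw_inv_into_left)
  have T'Q: "h \<in> Qfun B \<Longrightarrow> T' h \<in> Qfun A" for h using bij' by (auto simp: bij_betw_def)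
  show ?thesis unfolding rep_iso_def
  proof (intro exI[of _ T'] conjI ballI allI)
    show "bij_betw T' (Qfun B) (Qfun A)" by (rule bij')
  next
    fix f h assume fh: "f \<in> Qfun B" "h \<in> Qfun B"
    have "T (\<lambda>x. T' f x + T' h x) = (\<lambda>x. f x + h x)" using T(2) T'Q TT' fh by simp
    then show "T' (\<lambda>x. f x + h x) = (\<lambda>y. T' f y + T' h y)" using T'T T'Q fh by (metis Qfun_add)
  next
    fix c f assume f: "f \<in> Qfun B"
    have "T (\<lambda>x. c * T' f x) = (\<lambda>x. c * f x)" using T(3) T'Q TT' f by simp
    then show "T' (\<lambda>x. c * f x) = (\<lambda>y. c * T' f y)" using T'T T'Q f by (metis Qfun_smult)
  next
    fix g f assume g: "g \<in> carrier W" and f: "f \<in> Qfun B"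
    have "T (pact W a A g (T' f)) = pact W b B g f" using T(4) g T'Q TT' f by simp
    then show "T' (pact W b B g f) = pact W a A g (T' f)" using T'T Qfun_pact by metis
  qed
qed

lemma rep_iso_imp_Qfun_linear:
  assumes "rep_iso W a A b B"
  obtains T where "Qfun_linear A B T" "\<And>f. f \<in> Qfun A \<Longrightarrow> T f = (\<lambda>_. 0) \<Longrightarrow> f = (\<lambda>_. 0)"
    "\<And>g f. g \<in> carrier W \<Longrightarrow> f \<in> Qfun A \<Longrightarrow> T (pact W a A g f) = pact W b B g (T f)"
proof -
  obtain T where T: "bij_betw T (Qfun A) (Qfun B)"
    "\<forall>f\<in>Qfun A. \<forall>h\<in>Qfun A. T (\<lambda>x. f x + h x) = (\<lambda>y. T f y + T h y)"
    "\<forall>c. \<forall>f\<in>Qfun A. T (\<lambda>x. c * f x) = (\<lambda>y. c * T f y)"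
    "\<forall>g\<in>carrier W. \<forall>f\<in>Qfun A. T (pact W a A g f) = pact W b B g (T f)"
    using assms unfolding rep_iso_def by blast
  have lin: "Qfun_linear A B T" using T unfolding Qfun_linear_def bij_betw_def by auto
  have "f = (\<lambda>_. 0)" if "f \<in> Qfun A" "T f = (\<lambda>_. 0)" for f
    using that T(1) Qfun_linear_zero[OF lin] Qfun_zero unfolding bij_betw_def inj_on_def by metis
  then show ?thesis using that lin T(4) by blast
qed

section \<open>Counting orbits in rationally isomorphic permutation representations\<close>

definition orbit_label :: "('a, 'c) monoid_scheme \<Rightarrow> 'a set \<Rightarrow> 'a set \<times> nat \<times> 'a set \<Rightarrow> 'a set \<times> nat \<times> 'a set"
  where "orbit_label G C = (\<lambda>(S, j, D). (S, j, D <#>\<^bsub>G\<^esub> C))"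

context comm_group
begin

lemma finite_subgroups: "finite (carrier G) \<Longrightarrow> finite {S. subgroup S G}"
  by (rule finite_subset[of _ "Pow (carrier G)"]) (auto dest: subgroup.subset)

lemma finite_lcosets: "finite (carrier G) \<Longrightarrow> finite (lcosets H)"
  unfolding LCOSETS_def by simp

lemma lcosets_iff: "D \<in> lcosets H \<longleftrightarrow> (\<exists>a\<in>carrier G. D = a <# H)"
  by (auto simp: LCOSETS_def)

lemma lcos_mult_absorb:
  assumes "subgroup H G" "a \<in> carrier G" "h \<in> H"
  shows "(a \<otimes> h) <# H = a <# H"
proof -
  have "a \<otimes> h \<in> a <# H" using assms by (auto simp: l_coset_def)
  then show ?thesis using l_repr_independence[OF _ assms(2,1)] by simp
qed

lemma set_mult_subgroup_absorb:
  assumes "subgroup L G" "subgroup P G" "L \<subseteq> P"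
  shows "L <#> P = P"
proof
  show "L <#> P \<subseteq> P" using assms by (auto simp: set_mult_def intro: subgroup.m_closed)
  show "P \<subseteq> L <#> P"
  proof
    fix q assume q: "q \<in> P"
    then have "q = \<one> \<otimes> q" using subgroup.subset[OF assms(2)] by auto
    then show "q \<in> L <#> P" using q subgroup.one_closed[OF assms(1)] unfolding set_mult_def by blast
  qed
qed

lemma psets_Sigma: "psets G m = Sigma {S. subgroup S G} (\<lambda>S. Sigma {..<m S} (\<lambda>_. lcosets S))"
  by (auto simp: psets_def)

lemma finite_psets: "finite (carrier G) \<Longrightarrow> finite (psets G m)"
  unfolding psets_Sigma using finite_subgroups finite_lcosets by (intro finite_SigmaI) auto

lemma card_psets: "finite (carrier G) \<Longrightarrow>
   card (psets G m) = (\<Sum>S\<in>{S. subgroup S G}. m S * card (lcosets S))"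
  unfolding psets_Sigma using finite_subgroups finite_lcosets
  by (subst card_SigmaI) (auto simp: card_cartesian_product)

lemma psets_elem:
  assumes "x \<in> psets G m"
  obtains S :: "'a set" and j a where "x = (S, j, a <# S)" "subgroup S G" "j < m S" "a \<in> carrier G"
  using assms by (auto simp: psets_def lcosets_iff)

lemma cact_apply: "cact G g (S, j, D) = (S, j, g <# D)"
  by (simp add: cact_def)

lemma cact_closed:
  assumes "g \<in> carrier G" "x \<in> psets G m"
  shows "cact G g x \<in> psets G m"
proof -
  obtain S j a where x: "x = (S, j, a <# S)" "subgroup S G" "j < m S" "a \<in> carrier G"
    using assms(2) by (rule psets_elem)
  have "g <# (a <# S) = (g \<otimes> a) <# S"
    using x assms by (intro lcos_m_assoc) (auto dest: subgroup.subset)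
  then show ?thesis using x assms by (auto simp: psets_def cact_apply lcosets_iff)
qed

lemma orbit_label_image:
  assumes "subgroup C G"
  shows "orbit_label G C ` psets G m
    = Sigma {S. subgroup S G} (\<lambda>S. Sigma {..<m S} (\<lambda>_. lcosets (S <#> C)))"
proof -
  have eq: "subgroup S G \<Longrightarrow> a \<in> carrier G \<Longrightarrow> (a <# S) <#> C = a <# (S <#> C)" for S a
    using assms by (intro setmult_lcos_assoc) (auto dest: subgroup.subset)
  show ?thesis
    unfolding psets_def orbit_label_def
    by (auto simp: lcosets_iff eq image_iff) (metis eq)
qed

lemma card_orbit_label_image:
  assumes "finite (carrier G)" "subgroup C G"
  shows "card (orbit_label G C ` psets G m)
    = (\<Sum>S\<in>{S. subgroup S G}. m S * card (lcosets (S <#> C)))"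
  unfolding orbit_label_image[OF assms(2)]
  using finite_subgroups[OF assms(1)] finite_lcosets[OF assms(1)]
  by (subst card_SigmaI) (auto simp: card_cartesian_product)

lemma orbit_label_cact:
  assumes C: "subgroup C G" and g: "g \<in> C" and x: "x \<in> psets G m"
  shows "orbit_label G C (cact G g x) = orbit_label G C x"
proof -
  obtain S j a where x: "x = (S, j, a <# S)" "subgroup S G" "j < m S" "a \<in> carrier G"
    using x by (rule psets_elem)
  have gc: "g \<in> carrier G" using C g by (auto dest: subgroup.subset)
  have SC: "subgroup (S <#> C) G" using mult_subgroups[OF x(2) C] .
  have "\<one> \<otimes> g \<in> S <#> C" using g subgroup.one_closed[OF x(2)] unfolding set_mult_def by blast
  then have gSC: "g \<in> S <#> C" using gc by simp
  have "g <# (a <# S) = (g \<otimes> a) <# S"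
    using x gc by (intro lcos_m_assoc) (auto dest: subgroup.subset)
  moreover have "b \<in> carrier G \<Longrightarrow> (b <# S) <#> C = b <# (S <#> C)" for b
    using x C by (intro setmult_lcos_assoc) (auto dest: subgroup.subset)
  moreover have "(g \<otimes> a) <# (S <#> C) = a <# (S <#> C)"
    using lcos_mult_absorb[OF SC x(4) gSC] gc x(4) by (simp add: m_comm)
  ultimately show ?thesis using x gc by (simp add: orbit_label_def cact_apply)
qed

lemma orbit_label_eq_imp_cact:
  assumes C: "subgroup C G" and x: "x \<in> psets G m" and x': "x' \<in> psets G m"
    and eq: "orbit_label G C x = orbit_label G C x'"
  obtains c where "c \<in> C" "x' = cact G c x"
proof -
  obtain S j a where x: "x = (S, j, a <# S)" "subgroup S G" "j < m S" "a \<in> carrier G"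
    using x by (rule psets_elem)
  obtain S' j' a' where x': "x' = (S', j', a' <# S')" "subgroup S' G" "a' \<in> carrier G"
    using x' by (rule psets_elem)
  have assoc: "b \<in> carrier G \<Longrightarrow> (b <# S) <#> C = b <# (S <#> C)" for b
    using x C by (intro setmult_lcos_assoc) (auto dest: subgroup.subset)
  have SS: "S' = S" "j' = j" using eq x x' by (auto simp: orbit_label_def)
  have "a <# (S <#> C) = a' <# (S <#> C)" using eq x x' SS assoc by (simp add: orbit_label_def)
  moreover have "a' \<in> a' <# (S <#> C)"
    using mult_subgroups[OF x(2) C] x'(3) by (rule_tac lcos_self) auto
  ultimately have "a' \<in> a <# (S <#> C)" by simp
  then obtain s c where sc: "s \<in> S" "c \<in> C" "a' = a \<otimes> (s \<otimes> c)"
    by (auto simp: l_coset_def set_mult_def)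
  have sc': "s \<in> carrier G" "c \<in> carrier G" using sc x(2) C by (auto dest: subgroup.subset)
  have "a' = (c \<otimes> a) \<otimes> s" using sc sc' x(4) by (simp add: m_ac)
  then have "a' <# S = (c \<otimes> a) <# S" using lcos_mult_absorb[OF x(2) _ sc(1)] sc' x(4) by simp
  also have "\<dots> = c <# (a <# S)" using x sc' by (intro lcos_m_assoc[symmetric]) (auto dest: subgroup.subset)
  finally show ?thesis using that sc(2) x x' SS by (auto simp: cact_apply)
qed

lemma pact_fixed_if_orbit_constant:
  assumes C: "subgroup C G" and g: "g \<in> C" and f: "f \<in> Qfun (psets G m)"
    and const: "\<forall>x\<in>psets G m. \<forall>x'\<in>psets G m. orbit_label G C x = orbit_label G C x' \<longrightarrow> f x = f x'"
  shows "pact G (cact G) (psets G m) g f = f"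
proof
  fix y
  have ig: "inv g \<in> C" "inv g \<in> carrier G"
    using C g by (auto intro: subgroup.m_inv_closed dest: subgroup.subset)
  show "pact G (cact G) (psets G m) g f y = f y"
  proof (cases "y \<in> psets G m")
    case True
    then have "pact G (cact G) (psets G m) g f y = f (cact G (inv g) y)" by (simp add: pact_def)
    also have "\<dots> = f y"
      using const cact_closed[OF ig(2) True] orbit_label_cact[OF C ig(1) True] True by blast
    finally show ?thesis .
  next
    case False
    then show ?thesis using Qfun_outside[OF f False] by (simp add: pact_def)
  qed
qed

lemma orbit_constant_if_pact_fixed:
  assumes C: "subgroup C G" and h: "\<forall>g\<in>C. pact G (cact G) (psets G m) g h = h"
    and y: "y \<in> psets G m" "y' \<in> psets G m" "orbit_label G C y = orbit_label G C y'"
  shows "h y = h y'"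
proof -
  obtain c where c: "c \<in> C" "y' = cact G c y" using orbit_label_eq_imp_cact[OF C y] .
  have "c \<in> carrier G" "inv c \<in> C" using C c by (auto intro: subgroup.m_inv_closed dest: subgroup.subset)
  then have "h y = pact G (cact G) (psets G m) (inv c) h y" using h by metis
  also have "\<dots> = h y'" using y(1) c \<open>c \<in> carrier G\<close> by (simp add: pact_def)
  finally show ?thesis .
qed

lemma rep_iso_card_orbits_le:
  assumes fin: "finite (carrier G)" and C: "subgroup C G"
    and iso: "rep_iso G (cact G) (psets G m1) (cact G) (psets G m2)"
  shows "card (orbit_label G C ` psets G m1) \<le> card (orbit_label G C ` psets G m2)"
proof -
  obtain T where lin: "Qfun_linear (psets G m1) (psets G m2) T"
    and inj0: "\<And>f. f \<in> Qfun (psets G m1) \<Longrightarrow> T f = (\<lambda>_. 0) \<Longrightarrow> f = (\<lambda>_. 0)"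
    and equiv: "\<And>g f. g \<in> carrier G \<Longrightarrow> f \<in> Qfun (psets G m1) \<Longrightarrow>
       T (pact G (cact G) (psets G m1) g f) = pact G (cact G) (psets G m2) g (T f)"
    using rep_iso_imp_Qfun_linear[OF iso] by blast
  show ?thesis
  proof (rule Qfun_linear_card_fibres_le[OF lin finite_psets[OF fin] finite_psets[OF fin] inj0])
    fix f assume f: "f \<in> Qfun (psets G m1)"
      and const: "\<forall>x\<in>psets G m1. \<forall>x'\<in>psets G m1. orbit_label G C x = orbit_label G C x' \<longrightarrow> f x = f x'"
    have "pact G (cact G) (psets G m2) g (T f) = T f" if g: "g \<in> C" for g
    proof -
      have "g \<in> carrier G" using C g by (auto dest: subgroup.subset)
      then have "pact G (cact G) (psets G m2) g (T f) = T (pact G (cact G) (psets G m1) g f)"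
        by (rule equiv[OF _ f, symmetric])
      also have "\<dots> = T f" using pact_fixed_if_orbit_constant[OF C g f const] by simp
      finally show ?thesis .
    qed
    then show "\<forall>y\<in>psets G m2. \<forall>y'\<in>psets G m2. orbit_label G C y = orbit_label G C y' \<longrightarrow> T f y = T f y'"
      using orbit_constant_if_pact_fixed[OF C] by blast
  qed
qed

lemma burnside_kernel_orbit_equation:
  assumes fin: "finite (carrier G)" and C: "subgroup C G" and x: "x \<in> burnside_kernel G"
  shows "(\<Sum>S\<in>{S. subgroup S G}. x S * int (card (lcosets (S <#> C)))) = 0"
proof -
  define N where "N S = card (lcosets (S <#> C))" for S
  have iso: "rep_iso G (cact G) (psets G (\<lambda>S. nat (x S))) (cact G) (psets G (\<lambda>S. nat (- x S)))"
    using x by (simp add: burnside_kernel_def)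
  have "card (orbit_label G C ` psets G (\<lambda>S. nat (x S)))
      = card (orbit_label G C ` psets G (\<lambda>S. nat (- x S)))"
    using rep_iso_card_orbits_le[OF fin C iso] rep_iso_card_orbits_le[OF fin C rep_iso_sym[OF iso]]
    by (rule antisym)
  then have "(\<Sum>S\<in>{S. subgroup S G}. nat (x S) * N S) = (\<Sum>S\<in>{S. subgroup S G}. nat (- x S) * N S)"
    unfolding N_def card_orbit_label_image[OF fin C] .
  then have "(\<Sum>S\<in>{S. subgroup S G}. int (nat (x S)) * int (N S))
      = (\<Sum>S\<in>{S. subgroup S G}. int (nat (- x S)) * int (N S))"
    unfolding of_nat_mult[symmetric] of_nat_sum[symmetric] by (rule arg_cong[where f=int])
  then have "(\<Sum>S\<in>{S. subgroup S G}. int (nat (x S)) * int (N S) - int (nat (- x S)) * int (N S)) = 0"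
    by (simp add: sum_subtractf)
  moreover have "int (nat (x S)) * int (N S) - int (nat (- x S)) * int (N S) = x S * int (N S)" for S
    by (simp add: left_diff_distrib[symmetric])
  ultimately show ?thesis unfolding N_def by simp
qed

lemma burnside_kernel_lincomb_orbit_equation:
  assumes fin: "finite (carrier G)" and C: "subgroup C G" and A: "A \<subseteq> burnside_kernel G" "finite A"
  shows "(\<Sum>S\<in>{S. subgroup S G}. (\<Sum>x\<in>A. c x * x S) * int (card (lcosets (S <#> C)))) = 0"
proof -
  have "(\<Sum>S\<in>{S. subgroup S G}. (\<Sum>x\<in>A. c x * x S) * int (card (lcosets (S <#> C))))
      = (\<Sum>x\<in>A. c x * (\<Sum>S\<in>{S. subgroup S G}. x S * int (card (lcosets (S <#> C)))))"
    by (simp add: sum_distrib_left sum_distrib_right mult.assoc sum.swap[of _ A])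
  also have "\<dots> = 0"
    using burnside_kernel_orbit_equation[OF fin C] A by (simp add: subset_iff)
  finally show ?thesis .
qed

lemma lcosets_trivial: "lcosets {\<one>} = (\<lambda>a. {a}) ` carrier G"
  by (auto simp: LCOSETS_def l_coset_def)

lemma sum_lcos:
  assumes "a \<in> carrier G" "H \<subseteq> carrier G"
  shows "(\<Sum>x\<in>a <# H. h x) = (\<Sum>l\<in>H. h (a \<otimes> l))"
proof -
  have "inj_on (\<lambda>l. a \<otimes> l) H" using assms by (intro inj_onI) (simp add: subset_iff)
  moreover have "a <# H = (\<lambda>l. a \<otimes> l) ` H" by (auto simp: l_coset_def)
  ultimately show ?thesis by (simp add: sum.reindex)
qed

lemma sum_subgroup_mult_right:
  assumes P: "subgroup P G" and l: "l \<in> P"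
  shows "(\<Sum>q\<in>P. h (q \<otimes> l)) = (\<Sum>q\<in>P. h q)"
proof -
  have carrier: "q \<in> P \<Longrightarrow> q \<in> carrier G" for q using P by (auto dest: subgroup.subset)
  have "bij_betw (\<lambda>q. q \<otimes> l) P P"
  proof (rule bij_betwI[where g="\<lambda>q. q \<otimes> inv l"])
    show "(\<lambda>q. q \<otimes> l) \<in> P \<rightarrow> P" "(\<lambda>q. q \<otimes> inv l) \<in> P \<rightarrow> P"
      using P l by (auto intro: subgroup.m_closed subgroup.m_inv_closed)
  qed (use carrier l in \<open>simp_all add: m_assoc\<close>)
  then show ?thesis by (rule sum.reindex_bij_betw)
qed

end

section \<open>A relation attached to a plane and its lines\<close>

locale plane_config = comm_group G for G (structure) +
  fixes p :: nat and P :: "'a set" and L :: "nat \<Rightarrow> 'a set"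
  assumes finite_carrier: "finite (carrier G)"
    and two_le_p: "2 \<le> p"
    and subgroup_P: "subgroup P G" and card_P: "card P = p * p"
    and subgroup_L: "\<And>i. i \<le> p \<Longrightarrow> subgroup (L i) G"
    and card_L: "\<And>i. i \<le> p \<Longrightarrow> card (L i) = p"
    and L_subset_P: "\<And>i. i \<le> p \<Longrightarrow> L i \<subseteq> P"
    and L_inter: "\<And>i j. i \<le> p \<Longrightarrow> j \<le> p \<Longrightarrow> i \<noteq> j \<Longrightarrow> L i \<inter> L j = {\<one>}"
    and L_Union: "(\<Union>i\<le>p. L i) = P"
begin

definition plane_relation :: "'a set \<Rightarrow> int" where
  "plane_relation S =
     (if S = {\<one>} then 1 else if S = P then int p else if S \<in> L ` {..p} then -1 else 0)"

lemma p_less_square: "p < p * p"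
  using mult_le_mono2[OF two_le_p, of p] two_le_p by linarith

lemma trivial_ne_P: "{\<one>} \<noteq> P"
proof
  assume "{\<one>} = P"
  then have "card P = 1" by auto
  then show False using card_P p_less_square two_le_p by linarith
qed

lemma L_ne_trivial: "i \<le> p \<Longrightarrow> L i \<noteq> {\<one>}"
  using card_L two_le_p by fastforce

lemma L_ne_P: "i \<le> p \<Longrightarrow> L i \<noteq> P"
  using card_L card_P p_less_square by fastforce

lemma L_eq_iff: "i \<le> p \<Longrightarrow> j \<le> p \<Longrightarrow> L i = L j \<longleftrightarrow> i = j"
  using L_inter L_ne_trivial by fastforce

lemma finite_L: "i \<le> p \<Longrightarrow> finite (L i)"
  using card_L two_le_p card.infinite by fastforce

lemma finite_P: "finite P"
  using card_P two_le_p card.infinite by fastforce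

lemma plane_relation_trivial: "plane_relation {\<one>} = 1"
  by (simp add: plane_relation_def)

lemma plane_relation_P: "plane_relation P = int p"
  using trivial_ne_P by (simp add: plane_relation_def)

lemma plane_relation_L: "i \<le> p \<Longrightarrow> plane_relation (L i) = -1"
  using L_ne_trivial L_ne_P by (auto simp: plane_relation_def)

abbreviation "Xpos \<equiv> psets G (\<lambda>S. nat (plane_relation S))"
abbreviation "Xneg \<equiv> psets G (\<lambda>S. nat (- plane_relation S))"

lemma Xpos_iff: "(S, j, D) \<in> Xpos \<longleftrightarrow>
   (S = {\<one>} \<and> j = 0 \<and> D \<in> lcosets {\<one>}) \<or> (S = P \<and> j < p \<and> D \<in> lcosets P)"
  using trivial_ne_P triv_subgroup subgroup_P
  by (auto simp: psets_def plane_relation_def split: if_splits)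

lemma Xneg_iff: "(S, j, D) \<in> Xneg \<longleftrightarrow> (\<exists>i\<le>p. S = L i) \<and> j = 0 \<and> D \<in> lcosets S"
  using trivial_ne_P L_ne_trivial L_ne_P subgroup_L
  by (auto simp: psets_def plane_relation_def split: if_splits)

lemma lcos_L_mult_P:
  assumes i: "i \<le> p" and b: "b \<in> carrier G"
  shows "(b <# L i) <#> P = b <# P"
proof -
  have "(b <# L i) <#> P = b <# (L i <#> P)"
    using subgroup_L[OF i] subgroup_P b by (intro setmult_lcos_assoc) (auto dest: subgroup.subset)
  then show ?thesis using set_mult_subgroup_absorb[OF subgroup_L[OF i] subgroup_P L_subset_P[OF i]] by simp
qed

lemma sum_over_lines:
  fixes h :: "'a \<Rightarrow> rat"
  shows "(\<Sum>i\<le>p. \<Sum>l\<in>L i. h l) = of_nat p * h \<one> + (\<Sum>l\<in>P. h l)"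
proof -
  have one: "\<one> \<in> P" "\<And>i. i \<le> p \<Longrightarrow> \<one> \<in> L i"
    using subgroup_P subgroup_L by (auto intro: subgroup.one_closed)
  have "(\<Sum>i\<le>p. \<Sum>l\<in>L i. h l) = (\<Sum>i\<le>p. h \<one> + (\<Sum>l\<in>L i - {\<one>}. h l))"
    using finite_L one by (intro sum.cong refl) (simp add: sum.remove)
  also have "\<dots> = of_nat (Suc p) * h \<one> + (\<Sum>i\<le>p. \<Sum>l\<in>L i - {\<one>}. h l)"
    by (simp add: sum.distrib)
  also have "(\<Sum>i\<le>p. \<Sum>l\<in>L i - {\<one>}. h l) = (\<Sum>l\<in>(\<Union>i\<le>p. L i - {\<one>}). h l)"
    using finite_L L_inter by (intro sum.UNION_disjoint[symmetric]) fastforce+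
  also have "(\<Union>i\<le>p. L i - {\<one>}) = P - {\<one>}" using L_Union by blast
  also have "(\<Sum>l\<in>P - {\<one>}. h l) = (\<Sum>l\<in>P. h l) - h \<one>"
    using finite_P one by (simp add: sum_diff1)
  finally show ?thesis by (simp add: algebra_simps)
qed

text \<open>The isomorphism Q[W] \<oplus> Q[W/P]^p \<cong> \<Oplus>_i Q[W/L_i] on functions: the i-th copy of Q[W/P]
  is matched with L_i for i < p, and L_p receives minus the sum of all copies.\<close>

definition plane_intertwiner :: "('a set \<times> nat \<times> 'a set \<Rightarrow> rat) \<Rightarrow> ('a set \<times> nat \<times> 'a set \<Rightarrow> rat)" where
  "plane_intertwiner f = (\<lambda>y. if y \<in> Xneg then (case y of (S, j, D) \<Rightarrow>
      (\<Sum>a\<in>D. f ({\<one>}, 0, {a})) + (\<Sum>i\<in>{i. i < p \<and> S = L i}. f (P, i, D <#> P))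
      - (if S = L p then (\<Sum>i<p. f (P, i, D <#> P)) else 0)) else 0)"

lemma plane_intertwiner_linear: "Qfun_linear Xpos Xneg plane_intertwiner"
  unfolding Qfun_linear_def
proof (intro conjI ballI allI)
  fix f show "plane_intertwiner f \<in> Qfun Xneg" by (simp add: Qfun_def plane_intertwiner_def)
next
  fix f h :: "'a set \<times> nat \<times> 'a set \<Rightarrow> rat"
  show "plane_intertwiner (\<lambda>x. f x + h x) = (\<lambda>y. plane_intertwiner f y + plane_intertwiner h y)"
    by (rule ext) (simp add: plane_intertwiner_def sum.distrib split: prod.split)
next
  fix c :: rat and f :: "'a set \<times> nat \<times> 'a set \<Rightarrow> rat"
  show "plane_intertwiner (\<lambda>x. c * f x) = (\<lambda>y. c * plane_intertwiner f y)"
    by (rule ext) (simp add: plane_intertwiner_def sum_distrib_left algebra_simps split: prod.split)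
qed

lemma plane_intertwiner_at:
  assumes i: "i \<le> p" and b: "b \<in> carrier G"
  shows "plane_intertwiner f (L i, 0, b <# L i) = (\<Sum>l\<in>L i. f ({\<one>}, 0, {b \<otimes> l}))
           + (if i < p then f (P, i, b <# P) else - (\<Sum>k<p. f (P, k, b <# P)))"
proof -
  have mem: "(L i, 0, b <# L i) \<in> Xneg" using i b by (auto simp: Xneg_iff lcosets_iff)
  have sum: "(\<Sum>a\<in>b <# L i. f ({\<one>}, 0, {a})) = (\<Sum>l\<in>L i. f ({\<one>}, 0, {b \<otimes> l}))"
    using b subgroup_L[OF i] by (intro sum_lcos) (auto dest: subgroup.subset)
  have "{k. k < p \<and> L i = L k} = (if i < p then {i} else {})"
    using L_eq_iff i by auto
  then show ?thesis
    using mem sum lcos_L_mult_P[OF i b] L_eq_iff[OF i, of p] i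
    by (auto simp: plane_intertwiner_def)
qed

text \<open>By plane_intertwiner_at, these equations say that plane_intertwiner f = 0, where g and t
  are the values of f on W/1 and on the copies of W/P.\<close>

context
  fixes g :: "'a \<Rightarrow> rat" and t :: "nat \<Rightarrow> 'a set \<Rightarrow> rat"
  assumes line_eq: "\<And>i b. i \<le> p \<Longrightarrow> b \<in> carrier G \<Longrightarrow>
    (\<Sum>l\<in>L i. g (b \<otimes> l)) + (if i < p then t i (b <# P) else - (\<Sum>k<p. t k (b <# P))) = 0"
begin

lemma line_equation_averaged:
  assumes i: "i \<le> p" and b: "b \<in> carrier G"
  shows "of_nat p * (\<Sum>q\<in>P. g (b \<otimes> q))
    + of_nat (p * p) * (if i < p then t i (b <# P) else - (\<Sum>k<p. t k (b <# P))) = 0"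
proof -
  define c where "c = (if i < p then t i (b <# P) else - (\<Sum>k<p. t k (b <# P)))"
  have Pc: "q \<in> P \<Longrightarrow> q \<in> carrier G" for q using subgroup_P by (auto dest: subgroup.subset)
  have LP: "l \<in> L i \<Longrightarrow> l \<in> P" for l using L_subset_P[OF i] by auto
  have "0 = (\<Sum>q\<in>P. (\<Sum>l\<in>L i. g ((b \<otimes> q) \<otimes> l))
      + (if i < p then t i ((b \<otimes> q) <# P) else - (\<Sum>k<p. t k ((b \<otimes> q) <# P))))"
    using line_eq[OF i] b Pc by (simp add: sum.neutral)
  also have "\<dots> = (\<Sum>q\<in>P. (\<Sum>l\<in>L i. g (b \<otimes> (q \<otimes> l))) + c)"
    using lcos_mult_absorb[OF subgroup_P b] b Pc LP by (intro sum.cong refl) (simp add: c_def m_assoc)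
  also have "\<dots> = (\<Sum>l\<in>L i. \<Sum>q\<in>P. g (b \<otimes> (q \<otimes> l))) + of_nat (card P) * c"
    by (simp add: sum.distrib sum.swap[of _ P])
  also have "(\<Sum>l\<in>L i. \<Sum>q\<in>P. g (b \<otimes> (q \<otimes> l))) = (\<Sum>l\<in>L i. \<Sum>q\<in>P. g (b \<otimes> q))"
    using LP by (intro sum.cong refl sum_subgroup_mult_right[OF subgroup_P, of _ "\<lambda>q. g (b \<otimes> q)"]) auto
  finally show ?thesis using card_P card_L[OF i] by (simp add: c_def)
qed

lemma line_equations_trivial:
  shows "\<And>b. b \<in> carrier G \<Longrightarrow> g b = 0"
    and "\<And>i b. i < p \<Longrightarrow> b \<in> carrier G \<Longrightarrow> t i (b <# P) = 0"
proof -
  define s where "s b = (\<Sum>q\<in>P. g (b \<otimes> q))" for b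
  have p0: "(of_nat p :: rat) \<noteq> 0" using two_le_p by simp
  have s0: "s b = 0" if b: "b \<in> carrier G" for b
  proof -
    \<comment> \<open>the averaged equations for i < p determine every copy; the one for i = p then forces s b = 0\<close>
    have "of_nat (p * p) * t i (b <# P) = - (of_nat p * s b)" if "i < p" for i
      using line_equation_averaged[of i b] b that by (simp add: s_def algebra_simps)
    then have "of_nat (p * p) * (\<Sum>k<p. t k (b <# P)) = - (of_nat p * (of_nat p * s b))"
      by (simp add: sum_distrib_left)
    moreover have "of_nat p * s b - of_nat (p * p) * (\<Sum>k<p. t k (b <# P)) = 0"
      using line_equation_averaged[of p b] b by (simp add: s_def)
    ultimately have "(of_nat p + of_nat p * of_nat p) * s b = (0::rat)" by (simp add: algebra_simps)
    moreover have "(of_nat p + of_nat p * of_nat p :: rat) \<noteq> 0" using two_le_p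
      by (metis add_pos_pos mult_pos_pos of_nat_0_less_iff order_less_le_trans pos2 less_numeral_extra(3))
    ultimately show ?thesis by simp
  qed
  show t0: "t i (b <# P) = 0" if "i < p" "b \<in> carrier G" for i b
    using line_equation_averaged[of i b] s0[of b] that p0 by (simp add: s_def)
  show "g b = 0" if b: "b \<in> carrier G" for b
  proof -
    have "(\<Sum>l\<in>L i. g (b \<otimes> l)) = 0" if "i \<le> p" for i
      using line_eq[OF that b] t0 b by (simp split: if_splits)
    moreover have "(\<Sum>i\<le>p. \<Sum>l\<in>L i. g (b \<otimes> l)) = of_nat p * g (b \<otimes> \<one>) + s b"
      unfolding s_def by (rule sum_over_lines)
    ultimately have "of_nat p * g b = 0" using s0[OF b] b by simp
    then show ?thesis using p0 by simp
  qed
qed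

end

lemma plane_intertwiner_kernel_trivial:
  assumes f: "f \<in> Qfun Xpos" and zero: "plane_intertwiner f = (\<lambda>_. 0)"
  shows "f = (\<lambda>_. 0)"
proof -
  define g where "g a = f ({\<one>}, 0, {a})" for a
  define t where "t i E = f (P, i, E)" for i E
  have "(\<Sum>l\<in>L i. g (b \<otimes> l)) + (if i < p then t i (b <# P) else - (\<Sum>k<p. t k (b <# P))) = 0"
    if "i \<le> p" "b \<in> carrier G" for i b
  proof -
    have "plane_intertwiner f (L i, 0, b <# L i) = 0" using zero by simp
    then show ?thesis unfolding g_def t_def plane_intertwiner_at[OF that] .
  qed
  note trivial = line_equations_trivial[of g t, OF this]
  show ?thesis
  proof
    fix x
    show "f x = 0"
    proof (cases "x \<in> Xpos")
      case True
      then obtain S j D where x: "x = (S, j, D)"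
        "(S = {\<one>} \<and> j = 0 \<and> D \<in> lcosets {\<one>}) \<or> (S = P \<and> j < p \<and> D \<in> lcosets P)"
        by (cases x) (auto simp: Xpos_iff)
      then show ?thesis
        using trivial by (auto simp: lcosets_trivial lcosets_iff g_def t_def)
    next
      case False
      then show ?thesis by (rule Qfun_outside[OF f])
    qed
  qed
qed

lemma pact_Xpos_trivial:
  assumes g: "g \<in> carrier G" and a: "a \<in> carrier G"
  shows "pact G (cact G) Xpos g f ({\<one>}, 0, {a}) = f ({\<one>}, 0, {inv g \<otimes> a})"
proof -
  have "({\<one>}, 0, {a}) \<in> Xpos" using a by (simp add: Xpos_iff lcosets_trivial)
  then show ?thesis using g a by (simp add: pact_def cact_apply l_coset_def)
qed

lemma pact_Xpos_P:
  assumes g: "g \<in> carrier G" and b: "b \<in> carrier G" and k: "k < p"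
  shows "pact G (cact G) Xpos g f (P, k, b <# P) = f (P, k, (inv g \<otimes> b) <# P)"
proof -
  have "(P, k, b <# P) \<in> Xpos" using b k by (auto simp: Xpos_iff lcosets_iff)
  moreover have "inv g <# (b <# P) = (inv g \<otimes> b) <# P"
    using g b subgroup_P by (intro lcos_m_assoc) (auto dest: subgroup.subset)
  ultimately show ?thesis by (simp add: pact_def cact_apply)
qed

lemma plane_intertwiner_equivariant:
  assumes g: "g \<in> carrier G"
  shows "plane_intertwiner (pact G (cact G) Xpos g f) = pact G (cact G) Xneg g (plane_intertwiner f)"
proof
  fix y
  show "plane_intertwiner (pact G (cact G) Xpos g f) y = pact G (cact G) Xneg g (plane_intertwiner f) y"
  proof (cases "y \<in> Xneg")
    case True
    then obtain i b where y: "y = (L i, 0, b <# L i)" "i \<le> p" "b \<in> carrier G"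
      by (cases y) (auto simp: Xneg_iff lcosets_iff)
    have gb: "inv g \<otimes> b \<in> carrier G" using g y by simp
    have "cact G (inv g) y = (L i, 0, (inv g \<otimes> b) <# L i)"
      using y g subgroup_L[OF y(2)] by (simp add: cact_apply lcos_m_assoc subgroup.subset)
    then have "pact G (cact G) Xneg g (plane_intertwiner f) y
        = plane_intertwiner f (L i, 0, (inv g \<otimes> b) <# L i)"
      using True by (simp add: pact_def)
    also have "\<dots> = (\<Sum>l\<in>L i. f ({\<one>}, 0, {inv g \<otimes> b \<otimes> l}))
           + (if i < p then f (P, i, (inv g \<otimes> b) <# P) else - (\<Sum>k<p. f (P, k, (inv g \<otimes> b) <# P)))"
      by (rule plane_intertwiner_at[OF y(2) gb])
    also have "\<dots> = plane_intertwiner (pact G (cact G) Xpos g f) y"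
      unfolding y(1) plane_intertwiner_at[OF y(2) y(3)]
      using pact_Xpos_trivial[OF g] pact_Xpos_P[OF g y(3)] subgroup.subset[OF subgroup_L[OF y(2)]] y(3) g
      by (simp add: m_assoc subset_iff)
    finally show ?thesis by simp
  next
    case False
    then show ?thesis by (simp add: plane_intertwiner_def pact_def)
  qed
qed

lemma card_Xneg_le_Xpos: "card Xneg \<le> card Xpos"
proof -
  define k where "k = card (lcosets P)"
  have lagrange: "subgroup S G \<Longrightarrow> card (lcosets S) * card S = order G" for S
    using finite_carrier by (rule l_lagrange)
  have order: "order G = k * (p * p)" using lagrange[OF subgroup_P] card_P k_def by simp
  have card_lcosets_L: "card (lcosets (L i)) = k * p" if i: "i \<le> p" for i
    using lagrange[OF subgroup_L[OF i]] card_L[OF i] order two_le_p by (simp add: algebra_simps)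
  have fin: "finite {S. subgroup S G}" using finite_subgroups[OF finite_carrier] .
  have "card Xpos = (\<Sum>S\<in>{{\<one>}, P}. nat (plane_relation S) * card (lcosets S))"
    unfolding card_psets[OF finite_carrier] using triv_subgroup subgroup_P
    by (intro sum.mono_neutral_right[OF fin]) (auto simp: plane_relation_def)
  also have "\<dots> = order G + p * k"
    using trivial_ne_P lagrange[OF triv_subgroup] plane_relation_trivial plane_relation_P k_def by simp
  finally have Xpos: "card Xpos = order G + p * k" .
  have "card Xneg = (\<Sum>S\<in>L ` {..p}. nat (- plane_relation S) * card (lcosets S))"
    unfolding card_psets[OF finite_carrier] using subgroup_L two_le_p
    by (intro sum.mono_neutral_right[OF fin]) (auto simp: plane_relation_def)
  also have "\<dots> = (\<Sum>i\<le>p. nat (- plane_relation (L i)) * card (lcosets (L i)))"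
    using L_eq_iff by (subst sum.reindex) (auto simp: inj_on_def)
  also have "\<dots> = Suc p * (k * p)" using plane_relation_L card_lcosets_L by simp
  finally show ?thesis using Xpos order by (simp add: algebra_simps)
qed

lemma plane_relation_in_burnside_kernel: "plane_relation \<in> burnside_kernel G"
proof -
  have "plane_relation \<in> burnside G"
    using triv_subgroup subgroup_P subgroup_L
    by (auto simp: burnside_def plane_relation_def split: if_splits)
  moreover have "rep_iso G (cact G) Xpos (cact G) Xneg"
    unfolding rep_iso_def
  proof (intro exI[of _ plane_intertwiner] conjI ballI allI)
    show "bij_betw plane_intertwiner (Qfun Xpos) (Qfun Xneg)"
      by (rule Qfun_linear_bij_betw[OF plane_intertwiner_linear finite_psets[OF finite_carrier]
            finite_psets[OF finite_carrier] card_Xneg_le_Xpos plane_intertwiner_kernel_trivial])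
  next
    fix f h assume "f \<in> Qfun Xpos" "h \<in> Qfun Xpos"
    then show "plane_intertwiner (\<lambda>x. f x + h x) = (\<lambda>y. plane_intertwiner f y + plane_intertwiner h y)"
      by (rule Qfun_linear_add[OF plane_intertwiner_linear])
  next
    fix c f assume "f \<in> Qfun Xpos"
    then show "plane_intertwiner (\<lambda>x. c * f x) = (\<lambda>y. c * plane_intertwiner f y)"
      by (rule Qfun_linear_smult[OF plane_intertwiner_linear])
  next
    fix g f assume "g \<in> carrier G"
    then show "plane_intertwiner (pact G (cact G) Xpos g f) = pact G (cact G) Xneg g (plane_intertwiner f)"
      by (rule plane_intertwiner_equivariant)
  qed
  ultimately show ?thesis by (simp add: burnside_kernel_def)
qed

end

section \<open>Orbit equations in an abelian group of order p^3\<close>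

locale p_cube_group = comm_group G for G (structure) +
  fixes p :: nat
  assumes finite_carrier: "finite (carrier G)" and prime_p: "Factorial_Ring.prime p"
    and order_G: "order G = p ^ 3"
begin

lemma two_le_p: "2 \<le> p"
  using prime_p by (simp add: prime_ge_2_nat)

lemma p_ne_0: "p \<noteq> 0"
  using two_le_p by simp

lemma card_lcosets_mult_card: "subgroup H G \<Longrightarrow> card (lcosets H) * card H = p ^ 3"
  using l_lagrange[OF finite_carrier] order_G by simp

lemma finite_subgroup: "subgroup H G \<Longrightarrow> finite H"
  using finite_carrier by (auto dest: subgroup.subset intro: finite_subset)

lemma card_subgroup_eq_1: "subgroup H G \<Longrightarrow> card H = 1 \<Longrightarrow> H = {\<one>}"
  using subgroup.one_closed by (fastforce simp: card_1_singleton_iff)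

lemma card_subgroup_prime_power:
  assumes "subgroup H G"
  obtains i where "i \<le> 3" "card H = p ^ i"
proof -
  have "card H dvd p ^ 3" using card_lcosets_mult_card[OF assms] by (metis dvd_triv_right)
  then show ?thesis using divides_primepow_nat[OF prime_p] that by blast
qed

lemma card_set_mult_order_p:
  assumes S: "subgroup S G" and C: "subgroup C G" and "card S = p" "card C = p" "S \<noteq> C"
  shows "card (S <#> C) = p * p"
proof -
  have SC: "subgroup (S <#> C) G" by (rule mult_subgroups[OF S C])
  have CSC: "C \<subseteq> S <#> C" "S \<subseteq> S <#> C"
  proof
    fix c assume "c \<in> C"
    then have "c = \<one> \<otimes> c" "c \<in> C" using subgroup.subset[OF C] by auto
    then show "c \<in> S <#> C" using subgroup.one_closed[OF S] unfolding set_mult_def by blast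
  next
    show "S \<subseteq> S <#> C"
    proof
      fix s assume "s \<in> S"
      then have "s = s \<otimes> \<one>" "s \<in> S" using subgroup.subset[OF S] by auto
      then show "s \<in> S <#> C" using subgroup.one_closed[OF C] unfolding set_mult_def by blast
    qed
  qed
  have "\<not> S \<subseteq> C"
    using card_subset_eq[OF finite_subgroup[OF C]] assms(3-5) by auto
  then have "C \<subset> S <#> C" using CSC by blast
  then have "card C < card (S <#> C)" by (rule psubset_card_mono[OF finite_subgroup[OF SC]])
  then have lower: "p < card (S <#> C)" using assms(4) by simp
  have "S <#> C = (\<lambda>(s, c). s \<otimes> c) ` (S \<times> C)" by (auto simp: set_mult_def)
  then have upper: "card (S <#> C) \<le> p * p"
    using card_image_le[of "S \<times> C" "\<lambda>(s, c). s \<otimes> c"] finite_subgroup[OF S] finite_subgroup[OF C] assms(3,4)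
    by (simp add: card_cartesian_product)
  obtain i where i: "i \<le> 3" "card (S <#> C) = p ^ i" using card_subgroup_prime_power[OF SC] .
  have "p * p < p ^ 3" using two_le_p by (simp add: power3_eq_cube)
  moreover have "i \<noteq> 0" using i(2) lower two_le_p by (intro notI) simp
  moreover have "i \<noteq> 1" using i(2) lower by (intro notI) simp
  ultimately have "i = 2" using i upper by (cases "i = 3") auto
  then show ?thesis using i by (simp add: power2_eq_square)
qed

lemma card_lcosets_set_mult_carrier: "subgroup S G \<Longrightarrow> card (lcosets (S <#> carrier G)) = 1"
  using set_mult_subgroup_absorb[OF _ subgroup_self subgroup.subset] card_lcosets_mult_card[OF subgroup_self]
    order_G two_le_p by (simp add: order_def)

lemma card_lcosets_set_mult_order_p:
  assumes S: "subgroup S G" and C: "subgroup C G" and "card C = p" and "card S = 1 \<or> card S = p"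
  shows "card (lcosets (S <#> C)) = (if S = {\<one>} \<or> S = C then p * p else p)"
proof (cases "S = {\<one>} \<or> S = C")
  case True
  then have "S <#> C = C"
    using set_mult_subgroup_absorb[OF triv_subgroup C] subgroup.one_closed[OF C] subgroup_mult_id[OF C]
    by auto
  then have "card (lcosets (S <#> C)) * p = (p * p) * p"
    using card_lcosets_mult_card[OF C] assms(3) by (simp add: power3_eq_cube)
  then show ?thesis using True p_ne_0 by simp
next
  case False
  then have "card S = p" using assms(4) card_subgroup_eq_1[OF S] by auto
  then have "card (lcosets (S <#> C)) * (p * p) = p * (p * p)"
    using card_lcosets_mult_card[OF mult_subgroups[OF S C]] card_set_mult_order_p[OF S C _ assms(3)] False p_ne_0
    by (simp add: power3_eq_cube)
  then show ?thesis using False p_ne_0 by simp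
qed

context
  fixes y :: "'a set \<Rightarrow> int"
  assumes support: "\<And>S. y S \<noteq> 0 \<Longrightarrow> subgroup S G \<and> (card S = 1 \<or> card S = p)"
    and orbit_eq: "\<And>C. subgroup C G \<Longrightarrow> C = carrier G \<or> card C = p \<Longrightarrow>
      (\<Sum>S\<in>{S. subgroup S G}. y S * int (card (lcosets (S <#> C)))) = 0"
begin

lemma orbit_equations_order_p:
  assumes C: "subgroup C G" "card C = p"
  shows "y {\<one>} + y C = 0"
proof -
  have fin: "finite {S. subgroup S G}" by (rule finite_subgroups[OF finite_carrier])
  have sum_y: "(\<Sum>S\<in>{S. subgroup S G}. y S) = 0"
    using orbit_eq[OF subgroup_self] card_lcosets_set_mult_carrier by simp
  have "C \<noteq> {\<one>}" using C two_le_p by auto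
  \<comment> \<open>|W/SC| = p + (p^2 - p) [S = 1 or S = C] on the support of y\<close>
  then have summand: "y S * int (card (lcosets (S <#> C))) = int p * y S
      + (int p * int p - int p) * ((if S = {\<one>} then y S else 0) + (if S = C then y S else 0))"
    if "S \<in> {S. subgroup S G}" for S
    using support[of S] card_lcosets_set_mult_order_p[of S C] that C
    by (cases "y S = 0") (auto simp: algebra_simps)
  have "0 = (\<Sum>S\<in>{S. subgroup S G}. int p * y S
      + (int p * int p - int p) * ((if S = {\<one>} then y S else 0) + (if S = C then y S else 0)))"
    using orbit_eq[OF C(1)] C(2) summand by simp
  also have "\<dots> = (int p * int p - int p) * (y {\<one>} + y C)"
    using fin C(1) triv_subgroup sum_y
    by (simp add: sum.distrib sum_distrib_left[symmetric] sum.delta)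
  finally show ?thesis using two_le_p by (simp add: mult_eq_0_iff)
qed

lemma orbit_equations_zero:
  assumes Z: "subgroup Z G" "card Z = p" "y Z = 0"
  shows "y = (\<lambda>_. 0)"
proof
  have y_one: "y {\<one>} = 0" using orbit_equations_order_p[OF Z(1,2)] Z(3) by simp
  fix S
  show "y S = 0"
  proof (rule ccontr)
    assume "y S \<noteq> 0"
    then show False
      using support[of S] y_one card_subgroup_eq_1 orbit_equations_order_p[of S] by auto
  qed
qed

end

end

lemma DirProd_comm_group:
  assumes "comm_group A" "comm_group B"
  shows "comm_group (A \<times>\<times> B)"
proof -
  interpret A: comm_group A by fact
  interpret B: comm_group B by fact
  have "group (A \<times>\<times> B)" by (rule DirProd_group) (unfold_locales)
  then show ?thesis
    by (rule group.group_comm_groupI) (auto simp: A.m_comm B.m_comm)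
qed

lemma DirProd_nat_pow: "(x, y) [^]\<^bsub>A \<times>\<times> B\<^esub> (n::nat) = (x [^]\<^bsub>A\<^esub> n, y [^]\<^bsub>B\<^esub> n)"
  by (induction n) auto

lemma hom_restrict_carrier: "h \<in> hom G H \<Longrightarrow> K \<subseteq> carrier G \<Longrightarrow> h \<in> hom (G\<lparr>carrier := K\<rparr>) H"
  unfolding hom_def by (auto simp: Pi_def subset_iff)

lemma hom_graph_iff: "(k, h) \<in> hom_graph K \<rho> \<longleftrightarrow> k \<in> K \<and> h = \<rho> k"
  by (auto simp: hom_graph_def)

lemma card_hom_graph: "card (hom_graph K \<rho>) = card K"
  unfolding hom_graph_def by (rule card_image) (auto simp: inj_on_def)

lemma hom_graph_Int: "hom_graph A \<rho> \<inter> hom_graph B \<rho> = hom_graph (A \<inter> B) \<rho>"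
  by (auto simp: hom_graph_def)

lemma subgroup_hom_graph:
  assumes G: "group G" and H: "group H" and K: "subgroup K G"
    and \<rho>: "\<rho> \<in> hom (G\<lparr>carrier := K\<rparr>) H"
  shows "subgroup (hom_graph K \<rho>) (G \<times>\<times> H)"
proof -
  interpret G: group G by fact
  interpret H: group H by fact
  interpret GH: group "G \<times>\<times> H" by (rule DirProd_group[OF G H])
  interpret h: group_hom "G\<lparr>carrier := K\<rparr>" H \<rho>
    using G.subgroup_imp_group[OF K] H \<rho> by (simp add: group_hom_def group_hom_axioms_def)
  have Kc: "k \<in> K \<Longrightarrow> k \<in> carrier G" for k using K by (auto dest: subgroup.subset)
  have \<rho>c: "k \<in> K \<Longrightarrow> \<rho> k \<in> carrier H" for k using h.hom_closed by simp
  show ?thesis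
  proof (rule GH.subgroupI)
    show "hom_graph K \<rho> \<subseteq> carrier (G \<times>\<times> H)" using Kc \<rho>c by (auto simp: hom_graph_def)
    show "hom_graph K \<rho> \<noteq> {}" using subgroup.one_closed[OF K] by (auto simp: hom_graph_def)
  next
    fix a assume "a \<in> hom_graph K \<rho>"
    then obtain k where k: "k \<in> K" "a = (k, \<rho> k)" by (auto simp: hom_graph_def)
    have "inv\<^bsub>G \<times>\<times> H\<^esub> a = (inv\<^bsub>G\<^esub> k, inv\<^bsub>H\<^esub> \<rho> k)"
      using k Kc \<rho>c G H by simp
    also have "inv\<^bsub>H\<^esub> \<rho> k = \<rho> (inv\<^bsub>G\<lparr>carrier := K\<rparr>\<^esub> k)" using h.hom_inv k by simp
    also have "inv\<^bsub>G\<lparr>carrier := K\<rparr>\<^esub> k = inv\<^bsub>G\<^esub> k" using G.m_inv_consistent[OF K k(1)] .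
    finally show "inv\<^bsub>G \<times>\<times> H\<^esub> a \<in> hom_graph K \<rho>"
      using subgroup.m_inv_closed[OF K k(1)] by (auto simp: hom_graph_def)
  next
    fix a b assume "a \<in> hom_graph K \<rho>" "b \<in> hom_graph K \<rho>"
    then obtain k k' where k: "k \<in> K" "a = (k, \<rho> k)" "k' \<in> K" "b = (k', \<rho> k')"
      by (auto simp: hom_graph_def)
    have "\<rho> (k \<otimes>\<^bsub>G\<^esub> k') = \<rho> k \<otimes>\<^bsub>H\<^esub> \<rho> k'" using h.hom_mult k by simp
    then show "a \<otimes>\<^bsub>G \<times>\<times> H\<^esub> b \<in> hom_graph K \<rho>"
      using k subgroup.m_closed[OF K k(1) k(3)] by (auto simp: hom_graph_def)
  qed
qed

lemma is_graph_imp_subgroup: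
  assumes "group G" "group H" "is_graph G H L"
  obtains K where "subgroup K G" "subgroup L (G \<times>\<times> H)" "card L = card K"
proof -
  obtain K \<rho> where "subgroup K G" "\<rho> \<in> hom (G\<lparr>carrier := K\<rparr>) H" "L = hom_graph K \<rho>"
    using assms(3) unfolding is_graph_def by blast
  then show ?thesis using that subgroup_hom_graph[OF assms(1,2)] card_hom_graph by blast
qed

section \<open>The group C_p \<times> C_p \<times> C_p\<close>

lemma carrier_Cyc: "p \<noteq> 0 \<Longrightarrow> carrier (Cyc p) = {0..<int p}"
  by (simp add: carrier_integer_mod_group)

lemma prime_mult_mod_inj:
  fixes q a i j :: int
  assumes q: "Factorial_Ring.prime q" and a: "0 < a" "a < q" and i: "0 \<le> i" "i < q" and j: "0 \<le> j" "j < q"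
    and eq: "(a * i) mod q = (a * j) mod q"
  shows "i = j"
proof (rule ccontr)
  assume "i \<noteq> j"
  have "q dvd a * (i - j)" using eq by (simp add: mod_eq_dvd_iff right_diff_distrib)
  moreover have "\<not> q dvd a" using a zdvd_not_zless by blast
  ultimately have "q dvd (i - j)" using q by (simp add: prime_dvd_mult_iff)
  then have "\<bar>q\<bar> \<le> \<bar>i - j\<bar>" using dvd_imp_le_int \<open>i \<noteq> j\<close> by simp
  then show False using i j by linarith
qed

lemma prime_mult_mod_surj:
  fixes q a b :: int
  assumes q: "Factorial_Ring.prime q" and a: "0 < a" "a < q" and b: "0 \<le> b" "b < q"
  obtains i where "0 \<le> i" "i < q" "(a * i) mod q = b"
proof -
  let ?f = "\<lambda>i. (a * i) mod q"
  have "inj_on ?f {0..<q}"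
  proof (rule inj_onI)
    fix x y assume "x \<in> {0..<q}" "y \<in> {0..<q}" "?f x = ?f y"
    then show "x = y" using prime_mult_mod_inj[OF q a, of x y] by simp
  qed
  moreover have "?f ` {0..<q} \<subseteq> {0..<q}" using a by auto
  ultimately have "?f ` {0..<q} = {0..<q}" by (intro endo_inj_surj) simp_all
  then have "b \<in> ?f ` {0..<q}" using b by simp
  then show ?thesis using that by auto
qed

context
  fixes p :: nat
  assumes prime_p: "Factorial_Ring.prime p"
begin

abbreviation "V \<equiv> Cyc p \<times>\<times> Cyc p"
abbreviation "W \<equiv> V \<times>\<times> Cyc p"

lemma p_ne_0: "p \<noteq> 0"
  using prime_p by auto

lemma two_le_p: "2 \<le> p"
  using prime_p by (simp add: prime_ge_2_nat)

lemma carrier_Cyc_p: "carrier (Cyc p) = {0..<int p}"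
  using p_ne_0 by (rule carrier_Cyc)

lemma group_V: "group V"
  by (rule DirProd_group) simp_all

lemma comm_group_W: "comm_group W"
  by (intro DirProd_comm_group) simp_all

lemma card_carrier_V: "card (carrier V) = p * p"
  by (simp add: carrier_Cyc_p card_cartesian_product)

lemma p_cube_group_W: "p_cube_group W p"
proof -
  interpret comm_group W by (rule comm_group_W)
  show ?thesis
    using prime_p by unfold_locales (simp_all add: carrier_Cyc_p order_def card_cartesian_product power3_eq_cube)
qed

definition linear_form :: "int \<Rightarrow> int \<Rightarrow> int \<times> int \<Rightarrow> int" where
  "linear_form u v = (\<lambda>(a, b). (a * u + b * v) mod int p)"

lemma linear_form_hom: "linear_form u v \<in> hom V (Cyc p)"
proof -
  have "linear_form u v ((a + a') mod int p, (b + b') mod int p)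
      = (linear_form u v (a, b) + linear_form u v (a', b')) mod int p" for a a' b b'
  proof -
    have "((a + a') mod int p * u + (b + b') mod int p * v) mod int p
        = (((a + a') mod int p * u) mod int p + ((b + b') mod int p * v) mod int p) mod int p"
      by (rule mod_add_eq[symmetric])
    also have "\<dots> = ((a * u + b * v) + (a' * u + b' * v)) mod int p"
      by (simp only: mod_mult_left_eq mod_add_eq) (simp add: algebra_simps)
    finally show ?thesis by (simp add: linear_form_def mod_add_eq)
  qed
  then show ?thesis using p_ne_0 by (auto simp: hom_def carrier_Cyc_p linear_form_def)
qed

definition direction :: "nat \<Rightarrow> (int \<times> int) set" where
  "direction i = (if i < p then {(a, b). 0 \<le> a \<and> a < int p \<and> b = (a * int i) mod int p}
                  else {(a, b). a = 0 \<and> 0 \<le> b \<and> b < int p})"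

lemma direction_subset: "direction i \<subseteq> carrier V"
  using p_ne_0 by (auto simp: direction_def carrier_Cyc_p)

lemma subgroup_direction: "subgroup (direction i) V"
proof -
  interpret V: group V by (rule group_V)
  show ?thesis
  proof (rule V.subgroupI)
    show "direction i \<subseteq> carrier V" by (rule direction_subset)
    show "direction i \<noteq> {}" using p_ne_0 by (auto simp: direction_def intro!: exI[of _ 0])
  next
    fix x assume x: "x \<in> direction i"
    then obtain a b where ab: "x = (a, b)" "a \<in> carrier (Cyc p)" "b \<in> carrier (Cyc p)"
      using direction_subset by (cases x) auto
    then have "inv\<^bsub>V\<^esub> x = ((- a) mod int p, (- b) mod int p)" by simp
    then show "inv\<^bsub>V\<^esub> x \<in> direction i"
      using x ab p_ne_0 by (auto simp: direction_def carrier_Cyc_p mod_minus_eq mod_mult_left_eq)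
  next
    fix x y assume x: "x \<in> direction i" and y: "y \<in> direction i"
    then obtain a b a' b' where ab: "x = (a, b)" "y = (a', b')" by (cases x, cases y) auto
    show "x \<otimes>\<^bsub>V\<^esub> y \<in> direction i"
      using x y ab p_ne_0
      by (auto simp: direction_def mod_add_eq mod_mult_left_eq distrib_right)
  qed
qed

lemma card_direction: "card (direction i) = p"
proof -
  have "direction i = (if i < p then (\<lambda>a. (a, (a * int i) mod int p)) else (\<lambda>b. (0, b))) ` {0..<int p}"
    by (auto simp: direction_def)
  moreover have "inj_on (if i < p then (\<lambda>a. (a, (a * int i) mod int p)) else (\<lambda>b. (0, b))) {0..<int p}"
    by (auto simp: inj_on_def)
  ultimately show ?thesis by (simp add: card_image)
qed

lemma direction_Int:
  assumes "i \<le> p" "j \<le> p" "i \<noteq> j"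
  shows "direction i \<inter> direction j = {(0, 0)}"
proof
  show "{(0, 0)} \<subseteq> direction i \<inter> direction j" using p_ne_0 by (auto simp: direction_def)
  show "direction i \<inter> direction j \<subseteq> {(0, 0)}"
  proof
    fix x assume x: "x \<in> direction i \<inter> direction j"
    then obtain a b where ab: "x = (a, b)" "0 \<le> a" "a < int p" by (cases x) (auto simp: direction_def split: if_splits)
    have "a = 0"
    proof (cases "i < p \<and> j < p")
      case True
      then have "(a * int i) mod int p = (a * int j) mod int p" using x ab by (auto simp: direction_def)
      then show ?thesis
        using prime_mult_mod_inj[of "int p" a "int i" "int j"] prime_p ab True assms(3) by force
    next
      case False
      then show ?thesis using x ab assms by (auto simp: direction_def split: if_splits)
    qed
    then show "x \<in> {(0, 0)}" using x ab assms by (auto simp: direction_def split: if_splits)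
  qed
qed

lemma direction_Union: "(\<Union>i\<le>p. direction i) = carrier V"
proof
  show "(\<Union>i\<le>p. direction i) \<subseteq> carrier V" using direction_subset by auto
  show "carrier V \<subseteq> (\<Union>i\<le>p. direction i)"
  proof
    fix x assume "x \<in> carrier V"
    then obtain a b where ab: "x = (a, b)" "0 \<le> a" "a < int p" "0 \<le> b" "b < int p"
      by (cases x) (auto simp: carrier_Cyc_p)
    show "x \<in> (\<Union>i\<le>p. direction i)"
    proof (cases "a = 0")
      case True
      then have "x \<in> direction p" using ab by (simp add: direction_def)
      then show ?thesis by blast
    next
      case False
      then obtain i where i: "0 \<le> i" "i < int p" "(a * i) mod int p = b"
        using prime_mult_mod_surj[of "int p" a b] prime_p ab by auto
      then have "x \<in> direction (nat i)" using ab by (auto simp: direction_def)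
      moreover have "nat i \<le> p" using i by simp
      ultimately show ?thesis by blast
    qed
  qed
qed

definition plane :: "int \<Rightarrow> int \<Rightarrow> ((int \<times> int) \<times> int) set" where
  "plane u v = hom_graph (carrier V) (linear_form u v)"

definition line :: "int \<Rightarrow> int \<Rightarrow> nat \<Rightarrow> ((int \<times> int) \<times> int) set" where
  "line u v i = hom_graph (direction i) (linear_form u v)"

lemma is_graph_plane: "is_graph V (Cyc p) (plane u v)"
  unfolding is_graph_def plane_def
  using group.subgroup_self[OF group_V] hom_restrict_carrier[OF linear_form_hom] by blast

lemma is_graph_line: "is_graph V (Cyc p) (line u v i)"
  unfolding is_graph_def line_def
  using subgroup_direction hom_restrict_carrier[OF linear_form_hom direction_subset] by blast

lemma plane_config_plane: "plane_config W p (plane u v) (line u v)"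
  unfolding plane_config_def plane_config_axioms_def
proof (intro conjI allI impI)
  show "comm_group W" by (rule comm_group_W)
  show "finite (carrier W)" by (simp add: carrier_Cyc_p)
  show "2 \<le> p" by (rule two_le_p)
  show "subgroup (plane u v) W"
    unfolding plane_def
    by (rule subgroup_hom_graph[OF group_V _ group.subgroup_self[OF group_V]
          hom_restrict_carrier[OF linear_form_hom]]) simp_all
  show "card (plane u v) = p * p" unfolding plane_def card_hom_graph by (rule card_carrier_V)
  show "(\<Union>i\<le>p. line u v i) = plane u v"
    unfolding line_def plane_def hom_graph_def direction_Union[symmetric] by auto
  fix i
  show "subgroup (line u v i) W"
    unfolding line_def
    by (rule subgroup_hom_graph[OF group_V _ subgroup_direction
          hom_restrict_carrier[OF linear_form_hom direction_subset]]) simp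
  show "card (line u v i) = p" unfolding line_def card_hom_graph by (rule card_direction)
  show "line u v i \<subseteq> plane u v"
    unfolding line_def plane_def hom_graph_def using direction_subset by auto
  fix j assume "i \<le> p" "j \<le> p" "i \<noteq> j"
  then show "line u v i \<inter> line u v j = {\<one>\<^bsub>W\<^esub>}"
    unfolding line_def hom_graph_Int by (simp add: direction_Int hom_graph_def linear_form_def)
qed

lemma plane_iff: "((a, b), c) \<in> plane u v \<longleftrightarrow>
    0 \<le> a \<and> a < int p \<and> 0 \<le> b \<and> b < int p \<and> c = (a * u + b * v) mod int p"
  unfolding plane_def hom_graph_iff by (auto simp: carrier_Cyc_p linear_form_def)

abbreviation coefficients :: "(int \<times> int) set" where
  "coefficients \<equiv> {0..<int p} \<times> {0..<int p}"

lemma plane_eq_iff: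
  assumes "(u, v) \<in> coefficients" "(u', v') \<in> coefficients"
  shows "plane u v = plane u' v' \<longleftrightarrow> (u, v) = (u', v')"
proof
  assume eq: "plane u v = plane u' v'"
  have "((1, 0), u) \<in> plane u' v'" "((0, 1), v) \<in> plane u' v'"
    unfolding eq[symmetric] using assms two_le_p by (auto simp: plane_iff)
  then have "u = u' mod int p" "v = v' mod int p" by (simp_all add: plane_iff)
  then show "(u, v) = (u', v')" using assms by simp
qed simp

definition vertical_line :: "((int \<times> int) \<times> int) set" where
  "vertical_line = (\<lambda>c. ((0, 0), c)) ` {0..<int p}"

lemma subgroup_vertical_line: "subgroup vertical_line W"
proof -
  interpret W: group W by (rule DirProd_group[OF group_V]) simp
  show ?thesis
  proof (rule W.subgroupI)
    show "vertical_line \<subseteq> carrier W" "vertical_line \<noteq> {}"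
      using p_ne_0 by (auto simp: vertical_line_def carrier_Cyc_p)
  next
    fix a assume "a \<in> vertical_line"
    then obtain c where "a = ((0, 0), c)" "0 \<le> c" "c < int p" by (auto simp: vertical_line_def)
    then have "inv\<^bsub>W\<^esub> a = ((0, 0), (- c) mod int p)" using p_ne_0 by (simp add: carrier_Cyc_p group_V)
    then show "inv\<^bsub>W\<^esub> a \<in> vertical_line" using p_ne_0 by (auto simp: vertical_line_def)
  next
    fix a b assume "a \<in> vertical_line" "b \<in> vertical_line"
    then show "a \<otimes>\<^bsub>W\<^esub> b \<in> vertical_line" using p_ne_0 by (auto simp: vertical_line_def)
  qed
qed

lemma card_vertical_line: "card vertical_line = p"
  unfolding vertical_line_def by (subst card_image) (auto simp: inj_on_def)

lemma not_is_graph_vertical_line: "\<not> is_graph V (Cyc p) vertical_line"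
proof
  assume "is_graph V (Cyc p) vertical_line"
  then obtain K \<rho> where "vertical_line = hom_graph K \<rho>" unfolding is_graph_def by blast
  moreover have "((0, 0), 0) \<in> vertical_line" "((0, 0), 1) \<in> vertical_line"
    using two_le_p by (auto simp: vertical_line_def)
  ultimately show False by (simp add: hom_graph_iff)
qed

lemma card_graph_cases:
  assumes "is_graph V (Cyc p) L"
  shows "subgroup L W \<and> (card L = 1 \<or> card L = p \<or> card L = p * p)"
proof -
  obtain K where K: "subgroup K V" "subgroup L W" "card L = card K"
    using is_graph_imp_subgroup[OF group_V _ assms] by auto
  interpret V: group V by (rule group_V)
  have "card (lcosets\<^bsub>V\<^esub> K) * card K = p ^ 2"
    using V.l_lagrange[OF _ K(1)] card_carrier_V by (simp add: order_def power2_eq_square carrier_Cyc_p)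
  then have "card K dvd p ^ 2" by (metis dvd_triv_right)
  then obtain i where "i \<le> 2" "card K = p ^ i" using divides_primepow_nat[OF prime_p] by blast
  then have "card K = 1 \<or> card K = p \<or> card K = p * p"
    by (cases i) (auto simp: power2_eq_square le_Suc_eq)
  then show ?thesis using K by simp
qed

lemma graph_of_linear_form:
  assumes "\<rho> \<in> hom V (Cyc p)"
  obtains u v where "(u, v) \<in> coefficients" "hom_graph (carrier V) \<rho> = plane u v"
proof -
  interpret h: group_hom V "Cyc p" \<rho>
    using assms group_V by (simp add: group_hom_def group_hom_axioms_def)
  have e: "(1, 0) \<in> carrier V" "(0, 1) \<in> carrier V" using two_le_p by (auto simp: carrier_Cyc_p)
  define u where "u = \<rho> (1, 0)"
  define v where "v = \<rho> (0, 1)"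
  have "\<rho> (a, b) = linear_form u v (a, b)" if "(a, b) \<in> carrier V" for a b
  proof -
    have ab: "0 \<le> a" "a < int p" "0 \<le> b" "b < int p" using that by (auto simp: carrier_Cyc_p)
    have "(a, b) = (1, 0) [^]\<^bsub>V\<^esub> nat a \<otimes>\<^bsub>V\<^esub> (0, 1) [^]\<^bsub>V\<^esub> nat b"
      using ab by (simp add: DirProd_nat_pow)
    then have "\<rho> (a, b) = \<rho> ((1, 0) [^]\<^bsub>V\<^esub> nat a) \<otimes>\<^bsub>Cyc p\<^esub> \<rho> ((0, 1) [^]\<^bsub>V\<^esub> nat b)"
      by (metis e h.G.nat_pow_closed h.hom_mult)
    also have "\<dots> = (u [^]\<^bsub>Cyc p\<^esub> nat a) \<otimes>\<^bsub>Cyc p\<^esub> (v [^]\<^bsub>Cyc p\<^esub> nat b)"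
      using e h.hom_nat_pow by (simp add: u_def v_def)
    also have "\<dots> = linear_form u v (a, b)"
      using ab by (simp add: linear_form_def mod_add_eq)
    finally show ?thesis .
  qed
  then have "hom_graph (carrier V) \<rho> = plane u v"
    unfolding plane_def hom_graph_def by (intro image_cong refl) auto
  moreover have "(u, v) \<in> coefficients"
    using e h.hom_closed by (auto simp: u_def v_def carrier_Cyc_p)
  ultimately show ?thesis using that by blast
qed

lemma graph_of_order_p_square:
  assumes L: "is_graph V (Cyc p) L" and card: "card L = p * p"
  obtains u v where "(u, v) \<in> coefficients" "L = plane u v"
proof -
  obtain K \<rho> where K: "subgroup K V" "\<rho> \<in> hom (V\<lparr>carrier := K\<rparr>) (Cyc p)" "L = hom_graph K \<rho>"
    using L unfolding is_graph_def by blast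
  have "card K = card (carrier V)" using card card_carrier_V unfolding K(3) card_hom_graph by simp
  then have "K = carrier V"
    using card_subset_eq[OF _ subgroup.subset[OF K(1)]] by (simp add: carrier_Cyc_p)
  then have "\<rho> \<in> hom V (Cyc p)" using K(2) by (simp add: hom_def)
  then show ?thesis using graph_of_linear_form that K(3) \<open>K = carrier V\<close> by metis
qed

lemma is_graph_trivial: "is_graph V (Cyc p) {\<one>\<^bsub>W\<^esub>}"
proof -
  have "(\<lambda>_. 0) \<in> hom (V\<lparr>carrier := {\<one>\<^bsub>V\<^esub>}\<rparr>) (Cyc p)"
    using p_ne_0 by (auto simp: hom_def carrier_Cyc_p)
  moreover have "{\<one>\<^bsub>W\<^esub>} = hom_graph {\<one>\<^bsub>V\<^esub>} (\<lambda>_. 0)" by (simp add: hom_graph_def)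
  ultimately show ?thesis
    unfolding is_graph_def using group.triv_subgroup[OF group_V] by blast
qed

definition plane_rel :: "int \<Rightarrow> int \<Rightarrow> ((int \<times> int) \<times> int) set \<Rightarrow> int" where
  "plane_rel u v = plane_config.plane_relation W p (plane u v) (line u v)"

lemma plane_rel_in_kernel_bi: "plane_rel u v \<in> kernel_bi V (Cyc p)"
proof -
  interpret plane_config W p "plane u v" "line u v" by (rule plane_config_plane)
  have "plane_rel u v \<in> burnside_kernel W"
    unfolding plane_rel_def by (rule plane_relation_in_burnside_kernel)
  moreover have "is_graph V (Cyc p) L" if "plane_rel u v L \<noteq> 0" for L
    using that is_graph_trivial is_graph_plane is_graph_line
    by (auto simp: plane_rel_def plane_relation_def split: if_splits)
  ultimately show ?thesis by (auto simp: kernel_bi_def burnside_bi_def burnside_kernel_def)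
qed

lemma plane_rel_plane:
  assumes "(u, v) \<in> coefficients" "(u', v') \<in> coefficients"
  shows "plane_rel u v (plane u' v') = (if (u, v) = (u', v') then int p else 0)"
proof -
  interpret plane_config W p "plane u v" "line u v" by (rule plane_config_plane)
  have card: "card (plane u' v') = p * p" by (rule plane_config.card_P[OF plane_config_plane])
  show ?thesis
  proof (cases "(u, v) = (u', v')")
    case True
    then show ?thesis using plane_relation_P by (simp add: plane_rel_def)
  next
    case False
    then have "plane u' v' \<noteq> plane u v" using plane_eq_iff assms by blast
    moreover have "plane u' v' \<noteq> {\<one>\<^bsub>W\<^esub>}" using card p_less_square two_le_p by auto
    moreover have "plane u' v' \<noteq> line u v i" if "i \<le> p" for i
      using card card_L[OF that] p_less_square by auto
    ultimately show ?thesis using False by (auto simp: plane_rel_def plane_relation_def)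
  qed
qed

lemma inj_on_plane_rel: "inj_on (\<lambda>(u, v). plane_rel u v) coefficients"
proof (rule inj_onI)
  fix x y assume x: "x \<in> coefficients" and y: "y \<in> coefficients"
    and eq: "(\<lambda>(u, v). plane_rel u v) x = (\<lambda>(u, v). plane_rel u v) y"
  obtain u v u' v' where xy: "x = (u, v)" "y = (u', v')" by (cases x, cases y)
  have "plane_rel u' v' (plane u v) = int p"
    using eq xy plane_rel_plane[of u v u v] x by simp
  then show "x = y" using plane_rel_plane[of u' v' u v] x y xy p_ne_0 by (auto split: if_splits)
qed

lemma int_indep_plane_rels: "int_indep ((\<lambda>(u, v). plane_rel u v) ` coefficients)"
  unfolding int_indep_def
proof (intro allI impI ballI)
  let ?A = "(\<lambda>(u, v). plane_rel u v) ` coefficients"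
  fix c :: "(((int \<times> int) \<times> int) set \<Rightarrow> int) \<Rightarrow> int" and x
  assume zero: "(\<lambda>S. \<Sum>x\<in>?A. c x * x S) = (\<lambda>S. 0)" and x: "x \<in> ?A"
  then obtain u v where uv: "(u, v) \<in> coefficients" "x = plane_rel u v" by auto
  have "0 = (\<Sum>x'\<in>?A. c x' * x' (plane u v))" using fun_cong[OF zero, of "plane u v"] by simp
  also have "\<dots> = c x * x (plane u v) + (\<Sum>x'\<in>?A - {x}. c x' * x' (plane u v))"
    using x by (simp add: sum.remove)
  also have "(\<Sum>x'\<in>?A - {x}. c x' * x' (plane u v)) = 0"
    using uv plane_rel_plane by (intro sum.neutral) auto
  also have "x (plane u v) = int p" using uv plane_rel_plane by simp
  finally show "c x = 0" using p_ne_0 by simp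
qed

lemma exists_independent_subset_kernel_bi:
  "\<exists>A. A \<subseteq> kernel_bi V (Cyc p) \<and> finite A \<and> card A = p ^ 2 \<and> int_indep A"
proof (intro exI conjI)
  show "(\<lambda>(u, v). plane_rel u v) ` coefficients \<subseteq> kernel_bi V (Cyc p)"
    using plane_rel_in_kernel_bi by auto
  show "card ((\<lambda>(u, v). plane_rel u v) ` coefficients) = p ^ 2"
    using card_image[OF inj_on_plane_rel] by (simp add: card_cartesian_product power2_eq_square)
qed (simp_all add: int_indep_plane_rels)

lemma lincomb_kernel_bi_eq_0:
  assumes A: "A \<subseteq> kernel_bi V (Cyc p)" "finite A"
    and planes: "\<And>u v. (u, v) \<in> coefficients \<Longrightarrow> (\<Sum>x\<in>A. c x * x (plane u v)) = 0"
  shows "(\<lambda>S. \<Sum>x\<in>A. c x * x S) = (\<lambda>_. 0)"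
proof (rule p_cube_group.orbit_equations_zero[OF p_cube_group_W])
  have graph: "is_graph V (Cyc p) S" if "(\<Sum>x\<in>A. c x * x S) \<noteq> 0" for S
  proof -
    from that obtain x where "x \<in> A" "x S \<noteq> 0" by (metis (mono_tags, lifting) mult_zero_right sum.neutral)
    then show ?thesis using A(1) by (auto simp: kernel_bi_def burnside_bi_def)
  qed
  fix S assume nz: "(\<Sum>x\<in>A. c x * x S) \<noteq> 0"
  have "card S \<noteq> p * p"
  proof
    assume "card S = p * p"
    then obtain u v where "(u, v) \<in> coefficients" "S = plane u v"
      using graph_of_order_p_square[OF graph[OF nz]] by blast
    then show False using nz planes by simp
  qed
  then show "subgroup S W \<and> (card S = 1 \<or> card S = p)"
    using card_graph_cases[OF graph[OF nz]] by blast
next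
  fix C assume C: "subgroup C W"
  have "finite (carrier W)" by (simp add: carrier_Cyc_p)
  moreover have "A \<subseteq> burnside_kernel W" using A(1) by (auto simp: kernel_bi_def)
  ultimately show "(\<Sum>S\<in>{S. subgroup S W}. (\<Sum>x\<in>A. c x * x S) * int (card (lcosets\<^bsub>W\<^esub> (S <#>\<^bsub>W\<^esub> C)))) = 0"
    using comm_group.burnside_kernel_lincomb_orbit_equation[OF comm_group_W _ C _ A(2)] by blast
next
  show "subgroup vertical_line W" "card vertical_line = p"
    by (rule subgroup_vertical_line, rule card_vertical_line)
  show "(\<Sum>x\<in>A. c x * x vertical_line) = 0"
    using A(1) not_is_graph_vertical_line
    by (intro sum.neutral) (auto simp: kernel_bi_def burnside_bi_def)
qed

lemma card_independent_subset_kernel_bi: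
  assumes A: "A \<subseteq> kernel_bi V (Cyc p)" "finite A" "int_indep A"
  shows "card A \<le> p ^ 2"
proof (rule ccontr)
  define planes where "planes = (\<lambda>(u, v). plane u v) ` coefficients"
  have "card planes \<le> p ^ 2"
    using card_image_le[of coefficients "\<lambda>(u, v). plane u v"]
    by (simp add: planes_def card_cartesian_product power2_eq_square)
  moreover assume "\<not> card A \<le> p ^ 2"
  ultimately have "card planes < card A" by simp
  moreover have "finite planes" by (simp add: planes_def)
  ultimately obtain c where c: "\<exists>x\<in>A. c x \<noteq> 0" "\<forall>S\<in>planes. (\<Sum>x\<in>A. c x * x S) = 0"
    using homogeneous_system_nontrivial_solution[OF _ A(2), of planes "\<lambda>x S. x S"] by blast
  have "(\<lambda>S. \<Sum>x\<in>A. c x * x S) = (\<lambda>_. 0)"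
    using c(2) by (intro lincomb_kernel_bi_eq_0[OF A(1,2)]) (auto simp: planes_def)
  then show False using c(1) A(3) unfolding int_indep_def by blast
qed

end

theorem mainTheorem16:
  fixes p :: nat
  assumes "Factorial_Ring.prime p"
  shows "zrank (kernel_bi (Cyc p \<times>\<times> Cyc p) (Cyc p)) = p ^ 2"
  unfolding zrank_def
proof (rule Greatest_equality)
  show "\<exists>A. A \<subseteq> kernel_bi (Cyc p \<times>\<times> Cyc p) (Cyc p) \<and> finite A \<and> card A = p ^ 2 \<and> int_indep A"
    by (rule exists_independent_subset_kernel_bi[OF assms])
next
  fix n assume "\<exists>A. A \<subseteq> kernel_bi (Cyc p \<times>\<times> Cyc p) (Cyc p) \<and> finite A \<and> card A = n \<and> int_indep A"
  then obtain A where "A \<subseteq> kernel_bi (Cyc p \<times>\<times> Cyc p) (Cyc p)" "finite A" "card A = n" "int_indep A"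
    by blast
  then show "n \<le> p ^ 2" using card_independent_subset_kernel_bi[OF assms] by blast
qed

end
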